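(* Let $k$ be an algebraically closed field, $P=k[X_1,\ldots,X_n]$, $\mathfrak t=\langle X_1,\ldots,X_n\rangle$, and $M$ a Noetherian $P$-module with $x_i$ the action of $X_i$ on $M$. For $r\ge1$ let $M^{(r)}=P/\mathfrak t^r\otimes_kM$ (a $k$-space isomorphic to $M^{\binom{r+n-1}{n}}$) with the commuting $k$-linear operators $x_i^{(r)}=1\otimes x_i-X_i\otimes1$, making $M^{(r)}$ a $P$-module via $X_i\mapsto x_i^{(r)}$; put $x^{(r)}=(x^{(r)}_1,\ldots,x^{(r)}_n)$. Then $M^{(r)}$ is a Noetherian $P$-module, $\sigma(x^{(r)},M^{(r)})=\sigma(x,M)$ for all $r\ge1$, and $\dim_kH_p(x^{(r)}-a,M^{(r)})<\infty$ for all $p$, all $a\in k^n$ and all $r\ge1$ (i.e. $i(x^{(r)}-a)<\infty$).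
   Context: For a commutative $k$-algebra $R$, an $R$-module $M$ and an $n$-tuple $y$ in $R$, the Koszul complex $\operatorname{Kos}(y,M)$ is $0\leftarrow M\leftarrow M\otimes_k\wedge^1k^n\leftarrow\cdots\leftarrow M\otimes_k\wedge^nk^n\leftarrow 0$ with differential $\partial(u\otimes e_{i_1}\wedge\cdots\wedge e_{i_p})=\sum_{s=1}^p(-1)^{s+1}y_{i_s}u\otimes e_{i_1}\wedge\cdots\wedge\widehat{e_{i_s}}\wedge\cdots\wedge e_{i_p}$, with homology $H_p(y,M)$. For $a\in k^n$, $y-a=(y_1-a_1,\ldots,y_n-a_n)$. Taylor spectrum $\sigma(y,M)$: the set of $a\in k^n$ with $\operatorname{Kos}(y-a,M)$ not exact. Index: $i(y)=\sum_{p=0}^n(-1)^{p+1}\dim_kH_p(y,M)$, with $i(y)<\infty$ meaning all dimensions are finite. *)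

theory Defs
  imports Main "HOL-Library.Function_Algebras" "HOL-Computational_Algebra.Polynomial"
begin

definition alg_closed :: "'k::field itself \<Rightarrow> bool" where
  "alg_closed _ \<longleftrightarrow> (\<forall>p::'k poly. degree p \<ge> 1 \<longrightarrow> (\<exists>z. poly p z = 0))"

(* A P-module, P = k[X_0..X_{n-1}], given by a k-subspace V (of a k-vector space with
   scalar multiplication s) and commuting k-linear operators x i (i < n) on V. *)
definition pmodule :: "('k::field \<Rightarrow> 'm::ab_group_add \<Rightarrow> 'm) \<Rightarrow> 'm set \<Rightarrow> nat \<Rightarrow> (nat \<Rightarrow> 'm \<Rightarrow> 'm) \<Rightarrow> bool" where
  "pmodule s V n x \<longleftrightarrow>
     0 \<in> V \<and> (\<forall>u\<in>V. \<forall>v\<in>V. u + v \<in> V) \<and> (\<forall>c. \<forall>u\<in>V. s c u \<in> V) \<and>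
     (\<forall>i<n. \<forall>u\<in>V. x i u \<in> V) \<and>
     (\<forall>i<n. \<forall>u\<in>V. \<forall>v\<in>V. x i (u + v) = x i u + x i v) \<and>
     (\<forall>i<n. \<forall>c. \<forall>u\<in>V. x i (s c u) = s c (x i u)) \<and>
     (\<forall>i<n. \<forall>j<n. \<forall>u\<in>V. x i (x j u) = x j (x i u))"

definition psubmodule :: "('k::field \<Rightarrow> 'm::ab_group_add \<Rightarrow> 'm) \<Rightarrow> 'm set \<Rightarrow> nat \<Rightarrow> (nat \<Rightarrow> 'm \<Rightarrow> 'm) \<Rightarrow> 'm set \<Rightarrow> bool" where
  "psubmodule s V n x W \<longleftrightarrow>
     W \<subseteq> V \<and> 0 \<in> W \<and> (\<forall>u\<in>W. \<forall>v\<in>W. u + v \<in> W) \<and> (\<forall>c. \<forall>u\<in>W. s c u \<in> W) \<and>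
     (\<forall>i<n. \<forall>u\<in>W. x i u \<in> W)"

definition noetherian_pmodule :: "('k::field \<Rightarrow> 'm::ab_group_add \<Rightarrow> 'm) \<Rightarrow> 'm set \<Rightarrow> nat \<Rightarrow> (nat \<Rightarrow> 'm \<Rightarrow> 'm) \<Rightarrow> bool" where
  "noetherian_pmodule s V n x \<longleftrightarrow> pmodule s V n x \<and>
     (\<forall>C :: nat \<Rightarrow> 'm set. (\<forall>j. psubmodule s V n x (C j)) \<and> (\<forall>j. C j \<subseteq> C (Suc j))
        \<longrightarrow> (\<exists>N. \<forall>j\<ge>N. C j = C N))"

(* Koszul chains: V \<otimes> \<wedge>^p k^n, represented as functions on p-subsets of {..<n} *)
definition kos_chains :: "'m::zero set \<Rightarrow> nat \<Rightarrow> nat \<Rightarrow> (nat set \<Rightarrow> 'm) set" where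
  "kos_chains V n p = {c. (\<forall>I. c I \<in> V) \<and> (\<forall>I. c I \<noteq> 0 \<longrightarrow> I \<subseteq> {..<n} \<and> card I = p)}"

(* Koszul differential: d(u \<otimes> e_{i_1}\<and>..\<and>e_{i_p}) = \<Sum>_s (-1)^(s+1) y_{i_s} u \<otimes> ...;
   the coefficient at J of d c sums over I = insert i J, where s-1 = card {j\<in>J. j<i}. *)
definition kos_diff :: "('k::comm_ring_1 \<Rightarrow> 'm::ab_group_add \<Rightarrow> 'm) \<Rightarrow> nat \<Rightarrow> (nat \<Rightarrow> 'm \<Rightarrow> 'm)
     \<Rightarrow> (nat set \<Rightarrow> 'm) \<Rightarrow> (nat set \<Rightarrow> 'm)" where
  "kos_diff s n y c = (\<lambda>J. if J \<subseteq> {..<n}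
      then (\<Sum>i\<in>{..<n} - J. s ((-1) ^ card {j\<in>J. j < i}) (y i (c (insert i J))))
      else 0)"

definition kos_cycles where
  "kos_cycles s V n y p = {c \<in> kos_chains V n p. kos_diff s n y c = 0}"

definition kos_boundaries where
  "kos_boundaries s V n y p = kos_diff s n y ` kos_chains V n (Suc p)"

definition kos_exact where
  "kos_exact s V n y \<longleftrightarrow> (\<forall>p. kos_cycles s V n y p = kos_boundaries s V n y p)"

definition op_shift :: "('k \<Rightarrow> 'm::ab_group_add \<Rightarrow> 'm) \<Rightarrow> (nat \<Rightarrow> 'm \<Rightarrow> 'm) \<Rightarrow> (nat \<Rightarrow> 'k) \<Rightarrow> nat \<Rightarrow> 'm \<Rightarrow> 'm" where
  "op_shift s y a = (\<lambda>i u. y i u - s (a i) u)"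

(* points of k^n: a :: nat \<Rightarrow> 'k with a i = 0 for i \<ge> n *)
definition taylor_spectrum :: "('k::comm_ring_1 \<Rightarrow> 'm::ab_group_add \<Rightarrow> 'm) \<Rightarrow> 'm set \<Rightarrow> nat \<Rightarrow> (nat \<Rightarrow> 'm \<Rightarrow> 'm) \<Rightarrow> (nat \<Rightarrow> 'k) set" where
  "taylor_spectrum s V n y = {a. (\<forall>i\<ge>n. a i = 0) \<and> \<not> kos_exact s V n (op_shift s y a)}"

definition fscale :: "('k \<Rightarrow> 'm \<Rightarrow> 'm) \<Rightarrow> 'k \<Rightarrow> ('a \<Rightarrow> 'm) \<Rightarrow> ('a \<Rightarrow> 'm)" where
  "fscale s c f = (\<lambda>a. s c (f a))"

(* dim_k H_p(y,V) < \<infinity>: Z_p / B_p is finite-dimensional *)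
definition kos_homology_findim where
  "kos_homology_findim s V n y p \<longleftrightarrow>
     (\<exists>F. finite F \<and> F \<subseteq> kos_cycles s V n y p \<and>
          kos_cycles s V n y p \<subseteq> module.span (fscale s) (F \<union> kos_boundaries s V n y p))"

(* monomial basis of P / t^r: multi-indices \<alpha> with |\<alpha>| < r *)
definition trunc_idx :: "nat \<Rightarrow> nat \<Rightarrow> (nat \<Rightarrow> nat) set" where
  "trunc_idx n r = {\<alpha>. (\<forall>i\<ge>n. \<alpha> i = 0) \<and> sum \<alpha> {..<n} < r}"

(* M^(r) = P/t^r \<otimes>_k M: f \<alpha> is the M-coefficient of X^\<alpha> *)
definition Mr :: "'m set \<Rightarrow> nat \<Rightarrow> nat \<Rightarrow> ((nat \<Rightarrow> nat) \<Rightarrow> 'm::zero) set" where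
  "Mr V n r = {f. (\<forall>\<alpha>. f \<alpha> \<in> V) \<and> (\<forall>\<alpha>. f \<alpha> \<noteq> 0 \<longrightarrow> \<alpha> \<in> trunc_idx n r)}"

(* x_i^(r) = 1 \<otimes> x_i - X_i \<otimes> 1 *)
definition xr :: "(nat \<Rightarrow> 'm \<Rightarrow> 'm) \<Rightarrow> nat \<Rightarrow> nat \<Rightarrow> nat \<Rightarrow> ((nat \<Rightarrow> nat) \<Rightarrow> 'm::ab_group_add) \<Rightarrow> ((nat \<Rightarrow> nat) \<Rightarrow> 'm)" where
  "xr x n r i f = (\<lambda>\<alpha>. if \<alpha> \<in> trunc_idx n r
      then x i (f \<alpha>) - (if 1 \<le> \<alpha> i then f (\<alpha>(i := \<alpha> i - 1)) else 0)
      else 0)"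

end

theory Submission
  imports Defs
begin

text \<open>
  For a Noetherian module \<open>M\<close>, the Koszul complex of \<open>y\<close> is exact iff \<open>M = t M\<close>, where \<open>t\<close> is
  the ideal generated by the \<open>y\<^sub>i\<close>. One direction is \<open>H\<^sub>0 = M / t M\<close>. For the other,
  Nakayama's lemma gives an element of \<open>t\<close> acting as the identity on \<open>M\<close>, while every \<open>y\<^sub>i\<close>
  acts on the complex null-homotopically (through exterior multiplication by \<open>e\<^sub>i\<close>), so \<open>t\<close>
  kills the homology.

  Passing from \<open>P/t^(r+1)\<close> to \<open>P/t^r\<close> gives exact sequences \<open>0 \<rightarrow> K \<rightarrow> M^(r+1) \<rightarrow> M^(r) \<rightarrow> 0\<close>
  in which \<open>K\<close> is a direct sum of copies of \<open>M\<close>, one for each monomial of degree \<open>r\<close>, and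
  \<open>x^(r+1)\<close> acts on \<open>K\<close> as \<open>x\<close> because \<open>X\<^sub>i \<otimes> 1\<close> vanishes there. Noetherianity and
  \<open>M = (t - a) M\<close> both pass to such extensions, and conversely the coefficient of \<open>1\<close> maps
  \<open>M^(r)\<close> onto \<open>M\<close>; hence the spectra agree. Finally \<open>H\<^sub>p\<close> is a finitely generated module on
  which \<open>P\<close> acts through scalars, hence finite-dimensional.
\<close>

lemma sum_fun_apply: "(sum f A) x = (\<Sum>a\<in>A. f a x)"
  by (induct A rule: infinite_finite_induct) auto

definition tM_eq_M :: "'m::ab_group_add set \<Rightarrow> nat \<Rightarrow> (nat \<Rightarrow> 'm \<Rightarrow> 'm) \<Rightarrow> bool" where
  "tM_eq_M V n y \<longleftrightarrow> (\<forall>v\<in>V. \<exists>w. (\<forall>i<n. w i \<in> V) \<and> v = (\<Sum>i<n. y i (w i)))"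

lemma pmodule_cong:
  assumes "pmodule s V n y" and "\<And>i u. i < n \<Longrightarrow> u \<in> V \<Longrightarrow> y' i u = y i u"
  shows "pmodule s V n y'"
  using assms unfolding pmodule_def by auto

lemma psubmodule_cong:
  assumes "\<And>i u. i < n \<Longrightarrow> u \<in> V \<Longrightarrow> y' i u = y i u"
  shows "psubmodule s V n y' W \<longleftrightarrow> psubmodule s V n y W"
proof -
  have "y' i u = y i u" if "W \<subseteq> V" "i < n" "u \<in> W" for i u
    using assms that by blast
  then show ?thesis unfolding psubmodule_def by auto
qed

lemma noetherian_pmodule_psubmodule_cong:
  assumes "noetherian_pmodule s V n y" and "pmodule s V n y'"
    and "\<And>W. psubmodule s V n y' W \<longleftrightarrow> psubmodule s V n y W"
  shows "noetherian_pmodule s V n y'"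
  using assms(1,2) unfolding noetherian_pmodule_def assms(3) by blast

lemma noetherian_pmodule_cong:
  assumes N: "noetherian_pmodule s V n y" and eq: "\<And>i u. i < n \<Longrightarrow> u \<in> V \<Longrightarrow> y' i u = y i u"
  shows "noetherian_pmodule s V n y'"
proof (rule noetherian_pmodule_psubmodule_cong[OF N])
  show "pmodule s V n y'"
    by (rule pmodule_cong[OF _ eq]) (use N in \<open>simp add: noetherian_pmodule_def\<close>)
qed (rule psubmodule_cong[OF eq])

lemma noetherian_pmoduleD:
  assumes "noetherian_pmodule s V n y" "\<And>j. psubmodule s V n y (C j)" "\<And>j. C j \<subseteq> C (Suc j)"
  shows "\<exists>N. \<forall>j\<ge>N. C j = C N"
  using assms(1) unfolding noetherian_pmodule_def by (simp add: assms(2,3))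

lemma tM_eq_M_cong:
  assumes "tM_eq_M V n y" and "\<And>i u. i < n \<Longrightarrow> u \<in> V \<Longrightarrow> y' i u = y i u"
  shows "tM_eq_M V n y'"
  unfolding tM_eq_M_def
proof
  fix v assume "v \<in> V"
  then obtain w where w: "\<forall>i<n. w i \<in> V" "v = (\<Sum>i<n. y i (w i))"
    using assms(1) unfolding tM_eq_M_def by blast
  have "(\<Sum>i<n. y i (w i)) = (\<Sum>i<n. y' i (w i))"
    using w(1) assms(2) by (intro sum.cong) auto
  then show "\<exists>w. (\<forall>i<n. w i \<in> V) \<and> v = (\<Sum>i<n. y' i (w i))" using w by auto
qed

section \<open>Polynomial operators and Nakayama's lemma\<close>

locale pmod =
  fixes s :: "'k::field \<Rightarrow> 'm::ab_group_add \<Rightarrow> 'm" and V :: "'m set" and n :: nat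
    and y :: "nat \<Rightarrow> 'm \<Rightarrow> 'm"
  assumes mod: "module s" and pm: "pmodule s V n y"
begin

sublocale module s by (rule mod)

lemma zero_in_V: "0 \<in> V"
  and add_in_V: "u \<in> V \<Longrightarrow> v \<in> V \<Longrightarrow> u + v \<in> V"
  and scale_in_V: "u \<in> V \<Longrightarrow> s c u \<in> V"
  and y_in_V: "i < n \<Longrightarrow> u \<in> V \<Longrightarrow> y i u \<in> V"
  and y_add: "i < n \<Longrightarrow> u \<in> V \<Longrightarrow> v \<in> V \<Longrightarrow> y i (u + v) = y i u + y i v"
  and y_scale: "i < n \<Longrightarrow> u \<in> V \<Longrightarrow> y i (s c u) = s c (y i u)"
  and y_commute: "i < n \<Longrightarrow> j < n \<Longrightarrow> u \<in> V \<Longrightarrow> y i (y j u) = y j (y i u)"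
  using pm unfolding pmodule_def by blast+

lemma minus_in_V: "u \<in> V \<Longrightarrow> - u \<in> V"
  using scale_in_V[of u "-1"] by simp

lemma diff_in_V: "u \<in> V \<Longrightarrow> v \<in> V \<Longrightarrow> u - v \<in> V"
  by (metis add_in_V minus_in_V diff_conv_add_uminus)

lemma sum_in_V: "(\<And>a. a \<in> A \<Longrightarrow> f a \<in> V) \<Longrightarrow> sum f A \<in> V"
  by (induct A rule: infinite_finite_induct) (auto intro: zero_in_V add_in_V)

text \<open>The action of \<open>P = k[X]\<close> on \<open>V\<close>; operators are identified when they agree on \<open>V\<close>.\<close>

inductive_set polyop :: "('m \<Rightarrow> 'm) set" where
  polyop_id: "(\<lambda>u. u) \<in> polyop"
| polyop_scale: "(\<lambda>u. s c u) \<in> polyop"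
| polyop_y: "i < n \<Longrightarrow> y i \<in> polyop"
| polyop_add: "f \<in> polyop \<Longrightarrow> g \<in> polyop \<Longrightarrow> (\<lambda>u. f u + g u) \<in> polyop"
| polyop_comp: "f \<in> polyop \<Longrightarrow> g \<in> polyop \<Longrightarrow> (\<lambda>u. f (g u)) \<in> polyop"
| polyop_cong: "f \<in> polyop \<Longrightarrow> \<forall>u\<in>V. g u = f u \<Longrightarrow> g \<in> polyop"

definition pmod_endo :: "('m \<Rightarrow> 'm) \<Rightarrow> bool" where
  "pmod_endo f \<longleftrightarrow> (\<forall>u\<in>V. f u \<in> V) \<and> (\<forall>u\<in>V. \<forall>v\<in>V. f (u + v) = f u + f v) \<and>
     (\<forall>c. \<forall>u\<in>V. f (s c u) = s c (f u)) \<and> (\<forall>i<n. \<forall>u\<in>V. f (y i u) = y i (f u))"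

lemma pmod_endo_polyop: "f \<in> polyop \<Longrightarrow> pmod_endo f"
proof (induct rule: polyop.induct)
  case polyop_id then show ?case by (simp add: pmod_endo_def)
next
  case (polyop_scale c) then show ?case
    by (auto simp: pmod_endo_def scale_in_V scale_right_distrib y_scale mult.commute)
next
  case (polyop_y i) then show ?case
    by (auto simp: pmod_endo_def y_in_V y_add y_scale y_commute)
next
  case (polyop_add f g) then show ?case
    by (auto simp: pmod_endo_def add_in_V y_in_V y_add scale_in_V scale_right_distrib)
next
  case (polyop_comp f g) then show ?case
    by (auto simp: pmod_endo_def)
next
  case (polyop_cong f g) then show ?case
    by (auto simp: pmod_endo_def add_in_V scale_in_V y_in_V)
qed

lemma polyop_in_V: "f \<in> polyop \<Longrightarrow> u \<in> V \<Longrightarrow> f u \<in> V"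
  and polyop_add_distrib: "f \<in> polyop \<Longrightarrow> u \<in> V \<Longrightarrow> v \<in> V \<Longrightarrow> f (u + v) = f u + f v"
  and polyop_scale_commute: "f \<in> polyop \<Longrightarrow> u \<in> V \<Longrightarrow> f (s c u) = s c (f u)"
  and polyop_y_commute: "f \<in> polyop \<Longrightarrow> i < n \<Longrightarrow> u \<in> V \<Longrightarrow> f (y i u) = y i (f u)"
  using pmod_endo_polyop unfolding pmod_endo_def by blast+

lemma polyop_zero: "f \<in> polyop \<Longrightarrow> f 0 = 0"
  using polyop_add_distrib[of f 0 0] zero_in_V by simp

lemma y_zero: "i < n \<Longrightarrow> y i 0 = 0"
  using polyop_zero[OF polyop_y] .

lemma polyop_minus: "f \<in> polyop \<Longrightarrow> u \<in> V \<Longrightarrow> f (- u) = - f u"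
  using polyop_scale_commute[of f u "-1"] by simp

lemma polyop_diff_distrib: "f \<in> polyop \<Longrightarrow> u \<in> V \<Longrightarrow> v \<in> V \<Longrightarrow> f (u - v) = f u - f v"
  using polyop_add_distrib[of f u "- v"] polyop_minus[of f v] minus_in_V[of v] by simp

lemma polyop_sum_distrib:
  "f \<in> polyop \<Longrightarrow> (\<And>a. a \<in> A \<Longrightarrow> g a \<in> V) \<Longrightarrow> f (sum g A) = (\<Sum>a\<in>A. f (g a))"
  by (induct A rule: infinite_finite_induct) (auto simp: polyop_zero polyop_add_distrib sum_in_V)

lemma polyop_commute: "g \<in> polyop \<Longrightarrow> f \<in> polyop \<Longrightarrow> u \<in> V \<Longrightarrow> f (g u) = g (f u)"
proof (induct g arbitrary: u rule: polyop.induct)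
  case (polyop_add g h) then show ?case by (simp add: polyop_add_distrib polyop_in_V)
next
  case (polyop_comp g h) then show ?case by (simp add: polyop_in_V)
next
  case (polyop_cong g h) then show ?case by (simp add: polyop_in_V)
qed (auto simp: polyop_scale_commute polyop_y_commute)

lemma polyop_const_zero: "(\<lambda>u. 0) \<in> polyop"
  by (rule polyop_cong[OF polyop_scale[of 0]]) simp

lemma polyop_diff: "f \<in> polyop \<Longrightarrow> g \<in> polyop \<Longrightarrow> (\<lambda>u. f u - g u) \<in> polyop"
  using polyop_add[OF _ polyop_comp[OF polyop_scale[of "-1"]], of f g] by simp

lemma polyop_sum: "(\<And>a. a \<in> A \<Longrightarrow> f a \<in> polyop) \<Longrightarrow> (\<lambda>u. \<Sum>a\<in>A. f a u) \<in> polyop"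
proof (induct A rule: infinite_finite_induct)
  case (insert a A)
  then have "(\<lambda>u. f a u + (\<Sum>a\<in>A. f a u)) \<in> polyop" by (intro polyop_add) auto
  then show ?case using insert by simp
qed (auto simp: polyop_const_zero)

lemma psubmodule_polyop_closed: "f \<in> polyop \<Longrightarrow> psubmodule s V n y W \<Longrightarrow> u \<in> W \<Longrightarrow> f u \<in> W"
proof (induct f arbitrary: u rule: polyop.induct)
  case (polyop_cong f g) then show ?case unfolding psubmodule_def by auto
qed (auto simp: psubmodule_def)

definition ideal_ops :: "('m \<Rightarrow> 'm) set" where
  "ideal_ops = {g. \<exists>h. (\<forall>i<n. h i \<in> polyop) \<and> (\<forall>u\<in>V. g u = (\<Sum>i<n. y i (h i u)))}"

lemma ideal_opsI:
  "(\<And>i. i < n \<Longrightarrow> h i \<in> polyop) \<Longrightarrow> (\<And>u. u \<in> V \<Longrightarrow> g u = (\<Sum>i<n. y i (h i u))) \<Longrightarrow> g \<in> ideal_ops"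
  unfolding ideal_ops_def by blast

lemma ideal_opsE:
  assumes "g \<in> ideal_ops"
  obtains h where "\<And>i. i < n \<Longrightarrow> h i \<in> polyop" "\<And>u. u \<in> V \<Longrightarrow> g u = (\<Sum>i<n. y i (h i u))"
  using assms unfolding ideal_ops_def by blast

lemma ideal_ops_polyop: "g \<in> ideal_ops \<Longrightarrow> g \<in> polyop"
proof (elim ideal_opsE)
  fix h assume h: "\<And>i. i < n \<Longrightarrow> h i \<in> polyop" and g: "\<And>u. u \<in> V \<Longrightarrow> g u = (\<Sum>i<n. y i (h i u))"
  have "(\<lambda>u. \<Sum>i<n. y i (h i u)) \<in> polyop" using h by (intro polyop_sum polyop_comp[OF polyop_y]) auto
  then show "g \<in> polyop" by (rule polyop_cong) (simp add: g)
qed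

lemma ideal_ops_const_zero: "(\<lambda>u. 0) \<in> ideal_ops"
  by (rule ideal_opsI[of "\<lambda>i u. 0"]) (auto simp: polyop_const_zero y_zero)

lemma ideal_ops_y: "i < n \<Longrightarrow> y i \<in> ideal_ops"
proof (rule ideal_opsI[of "\<lambda>j u. if j = i then u else 0"])
  fix j assume "j < n"
  show "(\<lambda>u. if j = i then u else 0) \<in> polyop"
    by (cases "j = i") (simp_all add: polyop_id polyop_const_zero)
next
  fix u assume "i < n" "u \<in> V"
  then have "(\<Sum>j<n. y j (if j = i then u else 0)) = (\<Sum>j<n. if j = i then y i u else 0)"
    by (intro sum.cong) (auto simp: y_zero)
  then show "y i u = (\<Sum>j<n. y j (if j = i then u else 0))" using \<open>i < n\<close> by simp
qed

lemma ideal_ops_add: "f \<in> ideal_ops \<Longrightarrow> g \<in> ideal_ops \<Longrightarrow> (\<lambda>u. f u + g u) \<in> ideal_ops"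
proof (elim ideal_opsE)
  fix h h' assume h: "\<And>i. i < n \<Longrightarrow> h i \<in> polyop" "\<And>u. u \<in> V \<Longrightarrow> f u = (\<Sum>i<n. y i (h i u))"
    and h': "\<And>i. i < n \<Longrightarrow> h' i \<in> polyop" "\<And>u. u \<in> V \<Longrightarrow> g u = (\<Sum>i<n. y i (h' i u))"
  show "(\<lambda>u. f u + g u) \<in> ideal_ops"
  proof (rule ideal_opsI[of "\<lambda>i u. h i u + h' i u"])
    fix i assume "i < n" then show "(\<lambda>u. h i u + h' i u) \<in> polyop" by (simp add: polyop_add h h')
  next
    fix u assume u: "u \<in> V"
    have "(\<Sum>i<n. y i (h i u + h' i u)) = (\<Sum>i<n. y i (h i u) + y i (h' i u))"
      by (rule sum.cong) (auto simp: y_add polyop_in_V h h' u)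
    then show "f u + g u = (\<Sum>i<n. y i (h i u + h' i u))" by (simp add: h h' u sum.distrib)
  qed
qed

lemma ideal_ops_comp_left: "f \<in> polyop \<Longrightarrow> g \<in> ideal_ops \<Longrightarrow> (\<lambda>u. f (g u)) \<in> ideal_ops"
proof (elim ideal_opsE)
  fix h assume f: "f \<in> polyop"
    and h: "\<And>i. i < n \<Longrightarrow> h i \<in> polyop" "\<And>u. u \<in> V \<Longrightarrow> g u = (\<Sum>i<n. y i (h i u))"
  show "(\<lambda>u. f (g u)) \<in> ideal_ops"
  proof (rule ideal_opsI[of "\<lambda>i u. f (h i u)"])
    fix i assume "i < n" then show "(\<lambda>u. f (h i u)) \<in> polyop" by (simp add: polyop_comp f h)
  next
    fix u assume u: "u \<in> V"
    have "f (g u) = (\<Sum>i<n. f (y i (h i u)))"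
      unfolding h(2)[OF u] by (rule polyop_sum_distrib[OF f]) (auto intro: y_in_V polyop_in_V h u)
    also have "\<dots> = (\<Sum>i<n. y i (f (h i u)))"
      by (rule sum.cong) (auto simp: polyop_y_commute polyop_in_V f h u)
    finally show "f (g u) = (\<Sum>i<n. y i (f (h i u)))" .
  qed
qed

lemma ideal_ops_comp_right: "f \<in> polyop \<Longrightarrow> g \<in> ideal_ops \<Longrightarrow> (\<lambda>u. g (f u)) \<in> ideal_ops"
proof (elim ideal_opsE)
  fix h assume f: "f \<in> polyop"
    and h: "\<And>i. i < n \<Longrightarrow> h i \<in> polyop" "\<And>u. u \<in> V \<Longrightarrow> g u = (\<Sum>i<n. y i (h i u))"
  show "(\<lambda>u. g (f u)) \<in> ideal_ops"
    by (rule ideal_opsI[of "\<lambda>i u. h i (f u)"]) (auto intro: polyop_comp simp: f h polyop_in_V)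
qed

lemma ideal_ops_cong: "g \<in> ideal_ops \<Longrightarrow> (\<And>u. u \<in> V \<Longrightarrow> f u = g u) \<Longrightarrow> f \<in> ideal_ops"
  unfolding ideal_ops_def by auto

lemma polyop_scalar_plus_ideal_op:
  "h \<in> polyop \<Longrightarrow> \<exists>c g. g \<in> ideal_ops \<and> (\<forall>u\<in>V. h u = s c u + g u)"
proof (induct rule: polyop.induct)
  case polyop_id then show ?case using ideal_ops_const_zero by (intro exI[of _ 1]) auto
next
  case (polyop_scale c) then show ?case using ideal_ops_const_zero by (intro exI[of _ c]) auto
next
  case (polyop_y i) then show ?case using ideal_ops_y by (intro exI[of _ 0] exI[of _ "y i"]) auto
next
  case (polyop_add f g)
  then obtain c1 g1 c2 g2 where "g1 \<in> ideal_ops" "\<forall>u\<in>V. f u = s c1 u + g1 u"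
    "g2 \<in> ideal_ops" "\<forall>u\<in>V. g u = s c2 u + g2 u" by blast
  then show ?case
    by (intro exI[of _ "c1 + c2"] exI[of _ "\<lambda>u. g1 u + g2 u"])
      (auto intro!: ideal_ops_add simp: scale_left_distrib)
next
  case (polyop_comp f g)
  then obtain c1 g1 c2 g2 where fg: "g1 \<in> ideal_ops" "\<forall>u\<in>V. f u = s c1 u + g1 u"
    "g2 \<in> ideal_ops" "\<forall>u\<in>V. g u = s c2 u + g2 u" by blast
  have "(\<lambda>u. s c2 (g1 u) + f (g2 u)) \<in> ideal_ops"
    using ideal_ops_add[OF ideal_ops_comp_left[OF polyop_scale fg(1)] ideal_ops_comp_left[OF polyop_comp(1) fg(3)]] .
  moreover have "f (g u) = s (c2 * c1) u + (s c2 (g1 u) + f (g2 u))" if u: "u \<in> V" for u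
  proof -
    have g2: "g2 u \<in> V" using fg(3) u ideal_ops_polyop polyop_in_V by blast
    have "f (g u) = f (s c2 u) + f (g2 u)"
      using fg u polyop_comp g2 scale_in_V by (simp add: polyop_add_distrib)
    also have "\<dots> = s c2 (s c1 u + g1 u) + f (g2 u)"
      using fg u polyop_comp by (simp add: polyop_scale_commute)
    finally show ?thesis by (simp add: scale_right_distrib add.assoc)
  qed
  ultimately show ?case by blast
next
  case (polyop_cong f g) then show ?case by force
qed

lemma psubmodule_V: "psubmodule s V n y V"
  unfolding psubmodule_def by (auto intro: zero_in_V add_in_V scale_in_V y_in_V)

lemma psubmodule_zero: "psubmodule s V n y {0}"
  unfolding psubmodule_def by (auto intro: zero_in_V y_zero)

lemma psubmoduleD:
  assumes "psubmodule s V n y U"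
  shows "U \<subseteq> V" "0 \<in> U" "u \<in> U \<Longrightarrow> v \<in> U \<Longrightarrow> u + v \<in> U" "u \<in> U \<Longrightarrow> s c u \<in> U"
    "i < n \<Longrightarrow> u \<in> U \<Longrightarrow> y i u \<in> U"
  using assms unfolding psubmodule_def by blast+

lemma psubmodule_diff:
  assumes "psubmodule s V n y U" "u \<in> U" "v \<in> U"
  shows "u - v \<in> U"
  using psubmoduleD(3)[OF assms(1,2) psubmoduleD(4)[OF assms(1,3), of "-1"]] by simp

lemma psubmodule_sum: "psubmodule s V n y U \<Longrightarrow> (\<And>a. a \<in> A \<Longrightarrow> f a \<in> U) \<Longrightarrow> sum f A \<in> U"
  by (induct A rule: infinite_finite_induct) (auto intro: psubmoduleD)

definition extend_by :: "'m set \<Rightarrow> 'm \<Rightarrow> 'm set" where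
  "extend_by U m = {u + h m | u h. u \<in> U \<and> h \<in> polyop}"

fun generated :: "'m set \<Rightarrow> 'm list \<Rightarrow> 'm set" where
  "generated U [] = U"
| "generated U (m # G) = generated (extend_by U m) G"

lemma extend_byE:
  assumes "v \<in> extend_by U m"
  obtains u h where "v = u + h m" "u \<in> U" "h \<in> polyop"
  using assms unfolding extend_by_def by blast

lemma extend_byI: "u \<in> U \<Longrightarrow> h \<in> polyop \<Longrightarrow> u + h m \<in> extend_by U m"
  unfolding extend_by_def by blast

lemma psubmodule_extend_by:
  assumes U: "psubmodule s V n y U" and m: "m \<in> V"
  shows "psubmodule s V n y (extend_by U m)"
  unfolding psubmodule_def
proof (intro conjI ballI allI impI subsetI)
  fix v assume "v \<in> extend_by U m"
  then obtain u h where "v = u + h m" "u \<in> U" "h \<in> polyop" by (rule extend_byE)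
  then show "v \<in> V" using psubmoduleD(1)[OF U] polyop_in_V[OF _ m] add_in_V by blast
next
  show "0 \<in> extend_by U m"
    using extend_byI[OF psubmoduleD(2)[OF U] polyop_const_zero] by simp
next
  fix v v' assume "v \<in> extend_by U m" "v' \<in> extend_by U m"
  then obtain u h u' h' where v: "v = u + h m" "u \<in> U" "h \<in> polyop"
    and v': "v' = u' + h' m" "u' \<in> U" "h' \<in> polyop"
    by (metis extend_byE)
  have "(u + u') + (\<lambda>x. h x + h' x) m \<in> extend_by U m"
    by (rule extend_byI[OF psubmoduleD(3)[OF U v(2) v'(2)] polyop_add[OF v(3) v'(3)]])
  then show "v + v' \<in> extend_by U m" using v v' by (simp add: algebra_simps)
next
  fix c v assume "v \<in> extend_by U m"
  then obtain u h where v: "v = u + h m" "u \<in> U" "h \<in> polyop" by (rule extend_byE)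
  have "s c u + (\<lambda>x. s c (h x)) m \<in> extend_by U m"
    by (rule extend_byI[OF psubmoduleD(4)[OF U v(2)] polyop_comp[OF polyop_scale v(3)]])
  then show "s c v \<in> extend_by U m" using v by (simp add: scale_right_distrib)
next
  fix i v assume i: "i < n" and "v \<in> extend_by U m"
  from \<open>v \<in> extend_by U m\<close> obtain u h where v: "v = u + h m" "u \<in> U" "h \<in> polyop" by (rule extend_byE)
  have "y i u + (\<lambda>x. y i (h x)) m \<in> extend_by U m"
    by (rule extend_byI[OF psubmoduleD(5)[OF U i v(2)] polyop_comp[OF polyop_y[OF i] v(3)]])
  moreover have "y i v = y i u + y i (h m)"
    using v psubmoduleD(1)[OF U] polyop_in_V[OF v(3) m] y_add[OF i] by blast
  ultimately show "y i v \<in> extend_by U m" by simp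
qed

lemma extend_by_superset: "U \<subseteq> extend_by U m"
  using extend_byI[OF _ polyop_const_zero, of _ U m] by auto

lemma extend_by_mono: "U \<subseteq> U' \<Longrightarrow> extend_by U m \<subseteq> extend_by U' m"
  unfolding extend_by_def by blast

lemma generator_in_extend_by: "0 \<in> U \<Longrightarrow> m \<in> extend_by U m"
  using extend_byI[OF _ polyop_id, of 0 U m] by simp

lemma psubmodule_generated: "psubmodule s V n y U \<Longrightarrow> set G \<subseteq> V \<Longrightarrow> psubmodule s V n y (generated U G)"
  by (induct G arbitrary: U) (auto intro: psubmodule_extend_by)

lemma generated_superset: "U \<subseteq> generated U G"
proof (induct G arbitrary: U)
  case (Cons m G) then show ?case using extend_by_superset[of U m] by (metis generated.simps(2) order_trans)
qed simp

lemma generated_mono: "U \<subseteq> U' \<Longrightarrow> generated U G \<subseteq> generated U' G"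
  by (induct G arbitrary: U U') (auto dest: extend_by_mono)

lemma noetherian_finitely_generated:
  assumes N: "noetherian_pmodule s V n y" and W: "psubmodule s V n y W"
  shows "\<exists>G. set G \<subseteq> W \<and> W \<subseteq> generated {0} G"
proof (rule ccontr)
  assume H: "\<not> ?thesis"
  define next_gen where "next_gen G = (SOME w. w \<in> W \<and> w \<notin> generated {0} G)" for G
  have next_gen: "next_gen G \<in> W \<and> next_gen G \<notin> generated {0} G" if "set G \<subseteq> W" for G
  proof -
    have "\<exists>w. w \<in> W \<and> w \<notin> generated {0} G" using H that by blast
    then show ?thesis unfolding next_gen_def by (rule someI_ex)
  qed
  define Gs where "Gs = rec_nat [] (\<lambda>k G. next_gen G # G)"
  have Gs_Suc: "Gs (Suc k) = next_gen (Gs k) # Gs k" for k unfolding Gs_def by simp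
  have Gs_W: "set (Gs k) \<subseteq> W" for k
    by (induct k) (simp_all add: Gs_def next_gen)
  define C where "C k = generated {0} (Gs k)" for k
  have "\<exists>N. \<forall>j\<ge>N. C j = C N"
  proof (rule noetherian_pmoduleD[OF N])
    show "psubmodule s V n y (C j)" for j
      unfolding C_def using Gs_W psubmoduleD(1)[OF W]
      by (intro psubmodule_generated[OF psubmodule_zero]) blast
    show "C j \<subseteq> C (Suc j)" for j
      unfolding C_def Gs_Suc generated.simps by (rule generated_mono[OF extend_by_superset])
  qed
  then obtain N where "C (Suc N) = C N" by (metis le_Suc_eq order_refl)
  moreover have "next_gen (Gs N) \<in> C (Suc N)"
    unfolding C_def Gs_Suc generated.simps
    using generated_superset generator_in_extend_by[of "{0}"] by blast
  moreover have "next_gen (Gs N) \<notin> C N" unfolding C_def using next_gen Gs_W by blast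
  ultimately show False by simp
qed

lemma nakayama_step:
  assumes U: "psubmodule s V n y U" and m: "m \<in> V" and t: "tM_eq_M V n y"
    and e: "e \<in> polyop" and eU: "\<And>v. v \<in> V \<Longrightarrow> e v \<in> extend_by U m"
  shows "\<exists>b\<in>ideal_ops. e m - b m \<in> U"
proof -
  obtain w where w: "\<forall>i<n. w i \<in> V" "m = (\<Sum>i<n. y i (w i))"
    using t m unfolding tM_eq_M_def by blast
  have "\<forall>i<n. \<exists>u h. u \<in> U \<and> h \<in> polyop \<and> e (w i) = u + h m"
    using eU w(1) by (metis extend_byE)
  then obtain u h where uh: "\<And>i. i < n \<Longrightarrow> u i \<in> U \<and> h i \<in> polyop \<and> e (w i) = u i + h i m"
    by metis
  define b where "b v = (\<Sum>i<n. y i (h i v))" for v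
  have b: "b \<in> ideal_ops" by (rule ideal_opsI[of h]) (simp_all add: uh b_def)
  have uV: "u i \<in> V" if "i < n" for i using uh[OF that] psubmoduleD(1)[OF U] by blast
  have "e m = (\<Sum>i<n. e (y i (w i)))"
    unfolding w(2) by (rule polyop_sum_distrib[OF e]) (simp add: w(1) y_in_V)
  also have "\<dots> = (\<Sum>i<n. y i (u i) + y i (h i m))"
    by (rule sum.cong) (simp_all add: polyop_y_commute[OF e] w(1) uh y_add uV polyop_in_V m)
  also have "\<dots> = (\<Sum>i<n. y i (u i)) + b m" unfolding b_def by (simp add: sum.distrib)
  finally have "e m - b m = (\<Sum>i<n. y i (u i))" by simp
  also have "\<dots> \<in> U" using uh by (intro psubmodule_sum[OF U] psubmoduleD(5)[OF U]) auto
  finally show ?thesis using b by blast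
qed

text \<open>If \<open>g'\<close> works modulo \<open>extend_by U m\<close>, put \<open>e = id - g'\<close> and take \<open>b\<close> in the ideal with
  \<open>(e - b) m \<in> U\<close>; then \<open>id - (e - b) \<circ> e\<close> works modulo \<open>U\<close>.\<close>

lemma nakayama_generated:
  "set G \<subseteq> V \<Longrightarrow> psubmodule s V n y U \<Longrightarrow> V \<subseteq> generated U G \<Longrightarrow> tM_eq_M V n y
   \<Longrightarrow> \<exists>g\<in>ideal_ops. \<forall>v\<in>V. v - g v \<in> U"
proof (induct G arbitrary: U)
  case Nil then show ?case using ideal_ops_const_zero by (intro bexI[of _ "\<lambda>u. 0"]) auto
next
  case (Cons m G)
  note U = Cons.prems(2)
  have m: "m \<in> V" using Cons.prems(1) by auto
  obtain g' where g': "g' \<in> ideal_ops" "\<forall>v\<in>V. v - g' v \<in> extend_by U m"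
    using Cons.hyps[OF _ psubmodule_extend_by[OF U m]] Cons.prems by auto
  define e where "e v = v - g' v" for v
  have e: "e \<in> polyop"
    using polyop_diff[OF polyop_id ideal_ops_polyop[OF g'(1)]] unfolding e_def[abs_def] .
  have "e v \<in> extend_by U m" if "v \<in> V" for v using g'(2) that by (simp add: e_def)
  then have "\<exists>b\<in>ideal_ops. e m - b m \<in> U" by (rule nakayama_step[OF U m Cons.prems(4) e])
  then obtain b where b: "b \<in> ideal_ops" "e m - b m \<in> U" by blast
  define f where "f v = e v - b v" for v
  have f: "f \<in> polyop"
    using polyop_diff[OF e ideal_ops_polyop[OF b(1)]] unfolding f_def[abs_def] .
  have "(\<lambda>v. g' v + (g' (e v) + b (e v))) \<in> ideal_ops"
    by (rule ideal_ops_add[OF g'(1) ideal_ops_add[OF ideal_ops_comp_right[OF e g'(1)]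
          ideal_ops_comp_right[OF e b(1)]]])
  then have g: "(\<lambda>v. v - f (e v)) \<in> ideal_ops"
    by (rule ideal_ops_cong) (simp add: f_def e_def algebra_simps)
  have "\<forall>v\<in>V. v - (\<lambda>v. v - f (e v)) v \<in> U"
  proof
    fix v assume v: "v \<in> V"
    have "e v \<in> extend_by U m" using g'(2) v unfolding e_def by blast
    then obtain u h where uh: "e v = u + h m" "u \<in> U" "h \<in> polyop" by (rule extend_byE)
    have uV: "u \<in> V" using uh(2) psubmoduleD(1)[OF U] by blast
    have "f (e v) = f u + h (f m)"
      using uh f uV m by (simp add: polyop_add_distrib polyop_in_V polyop_commute[OF uh(3) f])
    moreover have "f u \<in> U" by (rule psubmodule_polyop_closed[OF f U uh(2)])
    moreover have "h (f m) \<in> U" using psubmodule_polyop_closed[OF uh(3) U] b(2) by (simp add: f_def)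
    ultimately show "v - (\<lambda>v. v - f (e v)) v \<in> U" using psubmoduleD(3)[OF U] by simp
  qed
  from this g show ?case by (rule bexI)
qed

lemma nakayama:
  assumes "noetherian_pmodule s V n y" and "tM_eq_M V n y"
  shows "\<exists>g\<in>ideal_ops. \<forall>v\<in>V. g v = v"
proof -
  obtain G where G: "set G \<subseteq> V" "V \<subseteq> generated {0} G"
    using noetherian_finitely_generated[OF assms(1) psubmodule_V] by blast
  obtain g where "g \<in> ideal_ops" "\<forall>v\<in>V. v - g v \<in> {0}"
    using nakayama_generated[OF G(1) psubmodule_zero G(2) assms(2)] by blast
  then show ?thesis by (intro bexI[of _ g]) auto
qed

section \<open>Shifts, homomorphisms and extensions\<close>

lemma pmod_shift: "pmod s V n (op_shift s y a)"
  unfolding pmod_def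
proof (rule conjI[OF mod])
  show "pmodule s V n (op_shift s y a)"
    unfolding pmodule_def op_shift_def
  proof (intro conjI ballI allI impI)
    show "0 \<in> V" by (rule zero_in_V)
  next
    fix u v assume "u \<in> V" "v \<in> V" then show "u + v \<in> V" by (rule add_in_V)
  next
    fix c u assume "u \<in> V" then show "s c u \<in> V" by (rule scale_in_V)
  next
    fix i u assume "i < n" "u \<in> V" then show "y i u - s (a i) u \<in> V"
      by (intro diff_in_V y_in_V scale_in_V)
  next
    fix i u v assume "i < n" "u \<in> V" "v \<in> V"
    then show "y i (u + v) - s (a i) (u + v) = y i u - s (a i) u + (y i v - s (a i) v)"
      by (simp add: y_add scale_right_distrib algebra_simps)
  next
    fix i c u assume "i < n" "u \<in> V"
    then show "y i (s c u) - s (a i) (s c u) = s c (y i u - s (a i) u)"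
      by (simp add: y_scale scale_right_diff_distrib mult.commute)
  next
    fix i j u assume ij: "i < n" "j < n" and u: "u \<in> V"
    have "y i (y j u - s (a j) u) = y i (y j u) - s (a j) (y i u)"
      using ij u by (simp add: polyop_diff_distrib[OF polyop_y] y_in_V scale_in_V y_scale)
    moreover have "y j (y i u - s (a i) u) = y j (y i u) - s (a i) (y j u)"
      using ij u by (simp add: polyop_diff_distrib[OF polyop_y] y_in_V scale_in_V y_scale)
    ultimately show "y i (y j u - s (a j) u) - s (a i) (y j u - s (a j) u) =
        y j (y i u - s (a i) u) - s (a j) (y i u - s (a i) u)"
      using ij u by (simp add: y_commute scale_right_diff_distrib scale_left_commute algebra_simps)
  qed
qed

lemma psubmodule_shift_iff: "psubmodule s V n (op_shift s y a) W \<longleftrightarrow> psubmodule s V n y W"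
proof -
  have "y i u \<in> W \<longleftrightarrow> y i u - s (a i) u \<in> W"
    if add: "\<forall>u\<in>W. \<forall>v\<in>W. u + v \<in> W" and scale: "\<forall>c. \<forall>u\<in>W. s c u \<in> W" and u: "u \<in> W"
    for i u
  proof
    assume "y i u \<in> W"
    then have "y i u + s (- a i) u \<in> W" using add scale u by blast
    then show "y i u - s (a i) u \<in> W" by (simp add: scale_minus_left)
  next
    assume "y i u - s (a i) u \<in> W"
    then have "(y i u - s (a i) u) + s (a i) u \<in> W" using add scale u by blast
    then show "y i u \<in> W" by simp
  qed
  then show ?thesis unfolding psubmodule_def op_shift_def by blast
qed

lemma noetherian_shift: "noetherian_pmodule s V n y \<Longrightarrow> noetherian_pmodule s V n (op_shift s y a)"
  by (rule noetherian_pmodule_psubmodule_cong[OF _ pmod.pm[OF pmod_shift] psubmodule_shift_iff])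

end

definition pmod_hom :: "nat \<Rightarrow> ('k \<Rightarrow> 'm::ab_group_add \<Rightarrow> 'm) \<Rightarrow> 'm set \<Rightarrow> (nat \<Rightarrow> 'm \<Rightarrow> 'm)
    \<Rightarrow> ('k \<Rightarrow> 'w::ab_group_add \<Rightarrow> 'w) \<Rightarrow> 'w set \<Rightarrow> (nat \<Rightarrow> 'w \<Rightarrow> 'w) \<Rightarrow> ('m \<Rightarrow> 'w) \<Rightarrow> bool"
  where
  "pmod_hom n s V y s' W y' h \<longleftrightarrow> (\<forall>v\<in>V. h v \<in> W) \<and> (\<forall>u\<in>V. \<forall>v\<in>V. h (u + v) = h u + h v) \<and>
     (\<forall>c. \<forall>v\<in>V. h (s c v) = s' c (h v)) \<and> (\<forall>i<n. \<forall>v\<in>V. h (y i v) = y' i (h v))"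

lemma pmod_homD:
  assumes "pmod_hom n s V y s' W y' h"
  shows "v \<in> V \<Longrightarrow> h v \<in> W" "u \<in> V \<Longrightarrow> v \<in> V \<Longrightarrow> h (u + v) = h u + h v"
    "v \<in> V \<Longrightarrow> h (s c v) = s' c (h v)" "i < n \<Longrightarrow> v \<in> V \<Longrightarrow> h (y i v) = y' i (h v)"
  using assms unfolding pmod_hom_def by blast+

lemma psubmodule_Int: "psubmodule s V n y C \<Longrightarrow> pmodule s K n y \<Longrightarrow> psubmodule s K n y (C \<inter> K)"
  unfolding psubmodule_def pmodule_def by auto

lemma noetherian_pmodule_zero: "pmodule s {0} n y \<Longrightarrow> noetherian_pmodule s {0} n y"
  unfolding noetherian_pmodule_def psubmodule_def by (metis subset_singletonD singleton_iff empty_iff)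

context pmod
begin

lemma pmod_hom_zero: "pmod_hom n s V y s' W y' h \<Longrightarrow> h 0 = 0"
  using pmod_homD(2)[of n s V y s' W y' h 0 0] zero_in_V by simp

lemma pmod_hom_diff: "pmod_hom n s V y s' W y' h \<Longrightarrow> u \<in> V \<Longrightarrow> v \<in> V \<Longrightarrow> h (u - v) = h u - h v"
  using pmod_homD(2)[of n s V y s' W y' h "u - v" v] diff_in_V by (simp add: eq_diff_eq)

lemma pmod_hom_sum:
  "pmod_hom n s V y s' W y' h \<Longrightarrow> (\<And>a. a \<in> A \<Longrightarrow> f a \<in> V) \<Longrightarrow> h (sum f A) = (\<Sum>a\<in>A. h (f a))"
  by (induct A rule: infinite_finite_induct) (auto simp: pmod_hom_zero pmod_homD(2) sum_in_V)

lemma pmod_hom_shift: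
  assumes h: "pmod_hom n s V y s' W y' h"
  shows "pmod_hom n s V (op_shift s y a) s' W (op_shift s' y' a) h"
  using h unfolding pmod_hom_def op_shift_def
  by (auto simp: pmod_hom_diff[OF h] y_in_V scale_in_V)

lemma psubmodule_hom_image:
  assumes h: "pmod_hom n s V y s' W y' h" and C: "psubmodule s V n y C"
  shows "psubmodule s' W n y' (h ` C)"
  unfolding psubmodule_def
proof (intro conjI ballI allI impI)
  show "h ` C \<subseteq> W" using psubmoduleD(1)[OF C] pmod_homD(1)[OF h] by blast
  show "0 \<in> h ` C" using pmod_hom_zero[OF h] psubmoduleD(2)[OF C] by (metis image_eqI)
next
  fix a b assume "a \<in> h ` C" "b \<in> h ` C"
  then obtain u v where "u \<in> C" "v \<in> C" "a = h u" "b = h v" by blast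
  then show "a + b \<in> h ` C"
    using pmod_homD(2)[OF h] psubmoduleD(1)[OF C] psubmoduleD(3)[OF C] by (metis image_eqI subsetD)
next
  fix c a assume "a \<in> h ` C"
  then obtain u where "u \<in> C" "a = h u" by blast
  then show "s' c a \<in> h ` C"
    using pmod_homD(3)[OF h] psubmoduleD(1)[OF C] psubmoduleD(4)[OF C] by (metis image_eqI subsetD)
next
  fix i a assume "i < n" "a \<in> h ` C"
  then obtain u where "u \<in> C" "a = h u" by blast
  then show "y' i a \<in> h ` C"
    using pmod_homD(4)[OF h] psubmoduleD(1)[OF C] psubmoduleD(5)[OF C] \<open>i < n\<close> by (metis image_eqI subsetD)
qed

lemma psubmodule_eq_of_hom:
  assumes h: "pmod_hom n s V y s' W y' h" and ker: "\<And>v. v \<in> V \<Longrightarrow> h v = 0 \<longleftrightarrow> v \<in> K"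
    and C: "psubmodule s V n y C" and C': "psubmodule s V n y C'" and "C \<subseteq> C'"
    and K: "C' \<inter> K \<subseteq> C" and im: "h ` C' \<subseteq> h ` C"
  shows "C' = C"
proof
  show "C' \<subseteq> C"
  proof
    fix v assume v: "v \<in> C'"
    then obtain w where w: "w \<in> C" "h v = h w" using im by blast
    have wC': "w \<in> C'" using w(1) \<open>C \<subseteq> C'\<close> by blast
    have vw: "v - w \<in> C'" by (rule psubmodule_diff[OF C' v wC'])
    have "h (v - w) = h v - h w"
      using pmod_hom_diff[OF h] psubmoduleD(1)[OF C'] v wC' by blast
    then have "h (v - w) = 0" using w(2) by simp
    then have "v - w \<in> C" using ker K vw psubmoduleD(1)[OF C'] by blast
    from psubmoduleD(3)[OF C this w(1)] show "v \<in> C" by simp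
  qed
qed (rule \<open>C \<subseteq> C'\<close>)

lemma noetherian_extension:
  fixes s' :: "'k \<Rightarrow> 'w::ab_group_add \<Rightarrow> 'w"
  assumes K: "K \<subseteq> V" "noetherian_pmodule s K n y"
    and W: "noetherian_pmodule s' W n y'"
    and h: "pmod_hom n s V y s' W y' h" and ker: "\<And>v. v \<in> V \<Longrightarrow> h v = 0 \<longleftrightarrow> v \<in> K"
  shows "noetherian_pmodule s V n y"
proof -
  have "\<exists>N. \<forall>j\<ge>N. C j = C N"
    if C: "\<And>j. psubmodule s V n y (C j)" "\<And>j. C j \<subseteq> C (Suc j)" for C
  proof -
    have mono: "C i \<subseteq> C j" if "i \<le> j" for i j using lift_Suc_mono_le[of C, OF C(2) that] .
    have "\<exists>N. \<forall>j\<ge>N. C j \<inter> K = C N \<inter> K"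
    proof (rule noetherian_pmoduleD[OF K(2)])
      show "psubmodule s K n y (C j \<inter> K)" for j
        using psubmodule_Int[OF C(1)] K(2) unfolding noetherian_pmodule_def by blast
      show "C j \<inter> K \<subseteq> C (Suc j) \<inter> K" for j using C(2) by blast
    qed
    then obtain N1 where N1: "\<And>j. j \<ge> N1 \<Longrightarrow> C j \<inter> K = C N1 \<inter> K" by blast
    have "\<exists>N. \<forall>j\<ge>N. h ` C j = h ` C N"
    proof (rule noetherian_pmoduleD[OF W])
      show "psubmodule s' W n y' (h ` C j)" for j by (rule psubmodule_hom_image[OF h C(1)])
      show "h ` C j \<subseteq> h ` C (Suc j)" for j using C(2) by blast
    qed
    then obtain N2 where N2: "\<And>j. j \<ge> N2 \<Longrightarrow> h ` C j = h ` C N2" by blast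
    have "C j = C (max N1 N2)" if "j \<ge> max N1 N2" for j
    proof (rule psubmodule_eq_of_hom[OF h ker C(1) C(1) mono[OF that]])
      show "C j \<inter> K \<subseteq> C (max N1 N2)" using N1[of j] N1[of "max N1 N2"] that by auto
      show "h ` C j \<subseteq> h ` C (max N1 N2)" using N2[of j] N2[of "max N1 N2"] that by auto
    qed
    then show ?thesis by blast
  qed
  then show ?thesis using pm unfolding noetherian_pmodule_def by blast
qed

lemma tM_eq_M_zero_module: "V = {0} \<Longrightarrow> tM_eq_M V n y"
  unfolding tM_eq_M_def by (auto simp: y_zero)

lemma tM_eq_M_image:
  assumes h: "pmod_hom n s V y s' W y' h" and onto: "\<And>w. w \<in> W \<Longrightarrow> \<exists>v\<in>V. h v = w"
    and t: "tM_eq_M V n y"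
  shows "tM_eq_M W n y'"
  unfolding tM_eq_M_def
proof
  fix w assume "w \<in> W"
  then obtain v where v: "v \<in> V" "h v = w" using onto by blast
  then obtain u where u: "\<forall>i<n. u i \<in> V" "v = (\<Sum>i<n. y i (u i))" using t unfolding tM_eq_M_def by blast
  have "w = h (\<Sum>i<n. y i (u i))" using v u by simp
  also have "\<dots> = (\<Sum>i<n. h (y i (u i)))" by (rule pmod_hom_sum[OF h]) (simp add: u y_in_V)
  also have "\<dots> = (\<Sum>i<n. y' i (h (u i)))" using u by (simp add: pmod_homD(4)[OF h])
  finally show "\<exists>u. (\<forall>i<n. u i \<in> W) \<and> w = (\<Sum>i<n. y' i (u i))"
    using u(1) pmod_homD(1)[OF h] by (intro exI[of _ "\<lambda>i. h (u i)"]) simp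
qed

lemma tM_eq_M_extension:
  assumes K: "K \<subseteq> V" "tM_eq_M K n y" and W: "tM_eq_M W n y'"
    and h: "pmod_hom n s V y s' W y' h" and onto: "\<And>w. w \<in> W \<Longrightarrow> \<exists>v\<in>V. h v = w"
    and ker: "\<And>v. v \<in> V \<Longrightarrow> h v = 0 \<longleftrightarrow> v \<in> K"
  shows "tM_eq_M V n y"
  unfolding tM_eq_M_def
proof
  fix v assume v: "v \<in> V"
  obtain w where w: "\<forall>i<n. w i \<in> W" "h v = (\<Sum>i<n. y' i (w i))"
    using W pmod_homD(1)[OF h v] unfolding tM_eq_M_def by blast
  have "\<forall>i\<in>{..<n}. \<exists>v. v \<in> V \<and> h v = w i" using w(1) onto by auto
  from bchoice[OF this] obtain u where u: "\<forall>i\<in>{..<n}. u i \<in> V \<and> h (u i) = w i" ..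
  have yu: "y i (u i) \<in> V" if "i < n" for i using u that y_in_V by simp
  have su: "(\<Sum>i<n. y i (u i)) \<in> V" by (rule sum_in_V) (simp add: yu)
  define r where "r = v - (\<Sum>i<n. y i (u i))"
  have r: "r \<in> V" unfolding r_def using v su by (rule diff_in_V)
  have "h r = h v - h (\<Sum>i<n. y i (u i))" unfolding r_def using v su by (rule pmod_hom_diff[OF h])
  also have "h (\<Sum>i<n. y i (u i)) = (\<Sum>i<n. h (y i (u i)))" by (rule pmod_hom_sum[OF h]) (simp add: yu)
  also have "\<dots> = (\<Sum>i<n. y' i (w i))" using u by (simp add: pmod_homD(4)[OF h])
  finally have "r \<in> K" using ker[OF r] w(2) by simp
  then obtain k where k: "\<forall>i<n. k i \<in> K" "r = (\<Sum>i<n. y i (k i))"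
    using K(2) unfolding tM_eq_M_def by blast
  have kV: "k i \<in> V" if "i < n" for i using k(1) K(1) that by blast
  have "v = (\<Sum>i<n. y i (u i)) + (\<Sum>i<n. y i (k i))" using k(2) unfolding r_def by (simp add: diff_eq_eq add.commute)
  also have "\<dots> = (\<Sum>i<n. y i (u i + k i))"
    unfolding sum.distrib[symmetric] using u kV by (intro sum.cong) (simp_all add: y_add)
  finally show "\<exists>w. (\<forall>i<n. w i \<in> V) \<and> v = (\<Sum>i<n. y i (w i))"
    using u kV add_in_V by (intro exI[of _ "\<lambda>i. u i + k i"]) simp
qed

end

lemma module_fscale: "module s \<Longrightarrow> module (fscale s)"
  unfolding module_def fscale_def by (auto simp: fun_eq_iff)

definition pointwise :: "('m \<Rightarrow> 'm) \<Rightarrow> ('a \<Rightarrow> 'm) \<Rightarrow> ('a \<Rightarrow> 'm)" where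
  "pointwise h c = (\<lambda>I. h (c I))"

lemma fscale_eq_pointwise: "fscale s c = pointwise (s c)"
  by (simp add: fun_eq_iff fscale_def pointwise_def)

definition supported_in :: "'m::zero set \<Rightarrow> 'a set \<Rightarrow> ('a \<Rightarrow> 'm) set" where
  "supported_in V S = {c. (\<forall>I. c I \<in> V) \<and> (\<forall>I. c I \<noteq> 0 \<longrightarrow> I \<in> S)}"

context pmod
begin

lemma pmod_supported_in: "pmod (fscale s) (supported_in V S) n (\<lambda>i. pointwise (y i))"
  unfolding pmod_def
proof (rule conjI[OF module_fscale[OF mod]])
  let ?F = "supported_in V S"
  have "0 \<in> ?F" unfolding supported_in_def using zero_in_V by simp
  moreover have "\<forall>u\<in>?F. \<forall>v\<in>?F. u + v \<in> ?F"
    unfolding supported_in_def by simp (metis add_in_V add.right_neutral)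
  moreover have "\<forall>c. \<forall>u\<in>?F. fscale s c u \<in> ?F"
    unfolding supported_in_def fscale_def by simp (metis scale_in_V scale_zero_right)
  moreover have "\<forall>i<n. \<forall>u\<in>?F. pointwise (y i) u \<in> ?F"
    unfolding supported_in_def pointwise_def by simp (metis y_in_V y_zero)
  moreover have "\<forall>i<n. \<forall>u\<in>?F. \<forall>v\<in>?F. pointwise (y i) (u + v) = pointwise (y i) u + pointwise (y i) v"
    unfolding supported_in_def pointwise_def by (simp add: fun_eq_iff y_add)
  moreover have "\<forall>i<n. \<forall>c. \<forall>u\<in>?F. pointwise (y i) (fscale s c u) = fscale s c (pointwise (y i) u)"
    unfolding supported_in_def pointwise_def fscale_def by (simp add: fun_eq_iff y_scale)
  moreover have "\<forall>i<n. \<forall>j<n. \<forall>u\<in>?F. pointwise (y i) (pointwise (y j) u) = pointwise (y j) (pointwise (y i) u)"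
    unfolding supported_in_def pointwise_def by (simp add: fun_eq_iff y_commute)
  ultimately show "pmodule (fscale s) ?F n (\<lambda>i. pointwise (y i))"
    unfolding pmodule_def by blast
qed

lemma noetherian_supported_in:
  assumes N: "noetherian_pmodule s V n y" and S: "finite S"
  shows "noetherian_pmodule (fscale s) (supported_in V S) n (\<lambda>i. pointwise (y i))"
  using S
proof (induct S rule: finite_induct)
  case empty
  have "supported_in V {} = {0}" unfolding supported_in_def using zero_in_V by auto
  then show ?case
    using noetherian_pmodule_zero pmod.pm[OF pmod_supported_in[of "{}"]] by metis
next
  case (insert I S)
  interpret F: pmod "fscale s" "supported_in V (insert I S)" n "\<lambda>i. pointwise (y i)"
    by (rule pmod_supported_in)
  show ?case
  proof (rule F.noetherian_extension[OF _ insert.hyps(3) N])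
    show "supported_in V S \<subseteq> supported_in V (insert I S)" unfolding supported_in_def by auto
    show "pmod_hom n (fscale s) (supported_in V (insert I S)) (\<lambda>i. pointwise (y i)) s V y (\<lambda>c. c I)"
      unfolding pmod_hom_def supported_in_def by (simp add: fscale_def pointwise_def)
    show "c I = 0 \<longleftrightarrow> c \<in> supported_in V S" if "c \<in> supported_in V (insert I S)" for c
      using that insert.hyps(2) unfolding supported_in_def by auto
  qed
qed

lemma tM_eq_M_supported_in:
  assumes t: "tM_eq_M V n y"
  shows "tM_eq_M (supported_in V S) n (\<lambda>i. pointwise (y i))"
  unfolding tM_eq_M_def
proof
  fix c assume c: "c \<in> supported_in V S"
  have "\<forall>I. \<exists>w. (\<forall>i<n. w i \<in> V) \<and> c I = (\<Sum>i<n. y i (w i))"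
    using t c unfolding tM_eq_M_def supported_in_def by blast
  from choice[OF this] obtain w where w: "\<forall>I. (\<forall>i<n. w I i \<in> V) \<and> c I = (\<Sum>i<n. y i (w I i))" ..
  define u where "u i I = (if c I = 0 then 0 else w I i)" for i I
  have "u i \<in> supported_in V S" if "i < n" for i
    using w c that zero_in_V unfolding u_def supported_in_def by auto
  moreover have "c = (\<Sum>i<n. pointwise (y i) (u i))"
  proof
    fix I
    show "c I = (\<Sum>i<n. pointwise (y i) (u i)) I"
      using w by (cases "c I = 0") (simp_all add: sum_fun_apply pointwise_def u_def y_zero)
  qed
  ultimately show "\<exists>u. (\<forall>i<n. u i \<in> supported_in V S) \<and> c = (\<Sum>i<n. pointwise (y i) (u i))"
    by (intro exI[of _ u]) simp
qed

end

section \<open>The Koszul complex\<close>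

definition koszul_sign :: "nat set \<Rightarrow> nat \<Rightarrow> 'k::comm_ring_1" where
  "koszul_sign K a = (-1) ^ card {j\<in>K. j < a}"

lemma koszul_sign_square: "koszul_sign K a * koszul_sign K a = 1"
  unfolding koszul_sign_def by (simp add: power_mult_distrib[symmetric])

lemma card_less_insert:
  assumes "finite K" "a \<notin> K"
  shows "card {j\<in>insert a K. j < b} = card {j\<in>K. j < b} + (if a < b then 1 else 0)"
proof (cases "a < b")
  case True
  then have "{j\<in>insert a K. j < b} = insert a {j\<in>K. j < b}" by auto
  then show ?thesis using assms True by simp
next
  case False
  then have "{j\<in>insert a K. j < b} = {j\<in>K. j < b}" by auto
  then show ?thesis using False by simp
qed

lemma koszul_sign_swap:
  assumes K: "finite K" "a \<notin> K" "b \<notin> K" "a \<noteq> b"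
  shows "koszul_sign K a * koszul_sign (insert a K) b
    = - (koszul_sign K b * koszul_sign (insert b K) a :: 'k::comm_ring_1)"
proof (cases "a < b")
  case True
  have "card {j\<in>insert a K. j < b} = Suc (card {j\<in>K. j < b})"
    "card {j\<in>insert b K. j < a} = card {j\<in>K. j < a}"
    using card_less_insert[OF K(1,2), of b] card_less_insert[OF K(1,3), of a] True by simp_all
  then show ?thesis unfolding koszul_sign_def by (simp only: power_Suc) (simp add: algebra_simps)
next
  case False
  then have "b < a" using K(4) by simp
  then have "card {j\<in>insert a K. j < b} = card {j\<in>K. j < b}"
    "card {j\<in>insert b K. j < a} = Suc (card {j\<in>K. j < a})"
    using card_less_insert[OF K(1,2), of b] card_less_insert[OF K(1,3), of a] by simp_all
  then show ?thesis unfolding koszul_sign_def by (simp only: power_Suc) (simp add: algebra_simps)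
qed

lemma koszul_sign_insert_swap:
  assumes K: "finite K" "k \<notin> K" "i \<notin> K" "k \<noteq> i"
  shows "koszul_sign (insert i K) k * koszul_sign (insert k K) i
    = - (koszul_sign K i * koszul_sign K k :: 'k::comm_ring_1)"
proof -
  let ?sg = "koszul_sign :: nat set \<Rightarrow> nat \<Rightarrow> 'k"
  have swap: "?sg K k * ?sg (insert k K) i = - (?sg K i * ?sg (insert i K) k)"
    by (rule koszul_sign_swap[OF K])
  have "?sg (insert i K) k * ?sg (insert k K) i
      = ?sg (insert i K) k * (?sg K k * (?sg K k * ?sg (insert k K) i))"
    by (simp add: mult.assoc[symmetric] koszul_sign_square)
  also have "\<dots> = - ((?sg (insert i K) k * ?sg (insert i K) k) * ?sg K i * ?sg K k)"
    unfolding swap by (simp add: algebra_simps)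
  finally show ?thesis by (simp add: koszul_sign_square)
qed

lemma sum_offdiag_antisym:
  fixes F :: "nat \<Rightarrow> nat \<Rightarrow> 'm::ab_group_add"
  assumes "finite R" "\<And>k l. k \<in> R \<Longrightarrow> l \<in> R \<Longrightarrow> k \<noteq> l \<Longrightarrow> F l k = - F k l"
  shows "(\<Sum>k\<in>R. \<Sum>l\<in>R - {k}. F k l) = 0"
  using assms
proof (induct R rule: finite_induct)
  case empty then show ?case by simp
next
  case (insert r R)
  have IH: "(\<Sum>k\<in>R. \<Sum>l\<in>R - {k}. F k l) = 0"
    by (rule insert.hyps(3)) (rule insert.prems, auto)
  have "(\<Sum>k\<in>insert r R. \<Sum>l\<in>insert r R - {k}. F k l)
      = (\<Sum>l\<in>R. F r l) + (\<Sum>k\<in>R. \<Sum>l\<in>insert r R - {k}. F k l)"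
    using sum.insert[OF insert.hyps(1,2), of "\<lambda>k. \<Sum>l\<in>insert r R - {k}. F k l"] insert.hyps(2)
    by (simp add: insert_Diff_if)
  also have "(\<Sum>k\<in>R. \<Sum>l\<in>insert r R - {k}. F k l) = (\<Sum>k\<in>R. F k r + (\<Sum>l\<in>R - {k}. F k l))"
  proof (rule sum.cong[OF refl])
    fix k assume "k \<in> R"
    then have "insert r R - {k} = insert r (R - {k})" "r \<notin> R - {k}" using insert.hyps(2) by auto
    then show "(\<Sum>l\<in>insert r R - {k}. F k l) = F k r + (\<Sum>l\<in>R - {k}. F k l)"
      using insert.hyps(1) by simp
  qed
  also have "\<dots> = (\<Sum>k\<in>R. F k r) + 0" using IH by (simp add: sum.distrib)
  also have "(\<Sum>l\<in>R. F r l) + ((\<Sum>k\<in>R. F k r) + 0) = (\<Sum>k\<in>R. F r k + F k r)"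
    by (simp add: sum.distrib)
  also have "\<dots> = 0"
  proof (rule sum.neutral, rule ballI)
    fix k assume k: "k \<in> R"
    then have "F k r = - F r k" using insert.prems[of r k] insert.hyps(2) by blast
    then show "F r k + F k r = 0" by simp
  qed
  finally show ?case .
qed

context pmod
begin

abbreviation kd :: "(nat set \<Rightarrow> 'm) \<Rightarrow> (nat set \<Rightarrow> 'm)" where
  "kd \<equiv> kos_diff s n y"

lemma kos_diff_apply:
  "J \<subseteq> {..<n} \<Longrightarrow> kd c J = (\<Sum>i\<in>{..<n} - J. s (koszul_sign J i) (y i (c (insert i J))))"
  by (simp add: kos_diff_def koszul_sign_def)

lemma kos_diff_outside: "\<not> J \<subseteq> {..<n} \<Longrightarrow> kd c J = 0"
  by (simp add: kos_diff_def)

lemma kos_chains_supported_in: "kos_chains V n p = supported_in V {I. I \<subseteq> {..<n} \<and> card I = p}"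
  unfolding kos_chains_def supported_in_def by auto

lemma pmod_kos_chains: "pmod (fscale s) (kos_chains V n p) n (\<lambda>i. pointwise (y i))"
  unfolding kos_chains_supported_in by (rule pmod_supported_in)

lemma kos_diff_in_V:
  assumes c: "\<And>I. c I \<in> V"
  shows "kd c J \<in> V"
proof (cases "J \<subseteq> {..<n}")
  case True
  have "(\<Sum>i\<in>{..<n} - J. s (koszul_sign J i) (y i (c (insert i J)))) \<in> V"
    by (rule sum_in_V, rule scale_in_V, rule y_in_V) (simp_all add: c)
  then show ?thesis using True by (simp add: kos_diff_apply)
qed (simp add: kos_diff_outside zero_in_V)

lemma kos_diff_kos_chains:
  assumes c: "c \<in> kos_chains V n (Suc p)"
  shows "kd c \<in> kos_chains V n p"
  unfolding kos_chains_def mem_Collect_eq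
proof (rule conjI; intro allI impI)
  show "kd c J \<in> V" for J using c unfolding kos_chains_def by (simp add: kos_diff_in_V)
next
  fix J assume nz: "kd c J \<noteq> 0"
  then have J: "J \<subseteq> {..<n}" using kos_diff_outside by blast
  then obtain i where i: "i \<in> {..<n} - J" "s (koszul_sign J i) (y i (c (insert i J))) \<noteq> 0"
    using nz by (auto simp: kos_diff_apply intro: sum.not_neutral_contains_not_neutral)
  then have "c (insert i J) \<noteq> 0" using y_zero by auto
  then have "card (insert i J) = Suc p" using c unfolding kos_chains_def by blast
  moreover have "finite J" using J finite_subset by blast
  ultimately show "J \<subseteq> {..<n} \<and> card J = p" using J i(1) by simp
qed

lemma kos_diff_pointwise:
  assumes h: "h \<in> polyop" and c: "\<And>I. c I \<in> V"
  shows "kd (pointwise h c) = pointwise h (kd c)"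
proof
  fix J
  show "kd (pointwise h c) J = pointwise h (kd c) J"
  proof (cases "J \<subseteq> {..<n}")
    case True
    have "pointwise h (kd c) J = h (\<Sum>i\<in>{..<n} - J. s (koszul_sign J i) (y i (c (insert i J))))"
      using True by (simp add: kos_diff_apply pointwise_def)
    also have "\<dots> = (\<Sum>i\<in>{..<n} - J. h (s (koszul_sign J i) (y i (c (insert i J)))))"
      by (rule polyop_sum_distrib[OF h]) (simp add: c scale_in_V y_in_V)
    also have "\<dots> = (\<Sum>i\<in>{..<n} - J. s (koszul_sign J i) (y i (h (c (insert i J)))))"
      by (rule sum.cong) (simp_all add: c polyop_scale_commute[OF h] polyop_y_commute[OF h] y_in_V)
    finally show ?thesis using True by (simp add: kos_diff_apply pointwise_def)
  next
    case False then show ?thesis by (simp add: kos_diff_outside pointwise_def polyop_zero[OF h])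
  qed
qed

lemma kos_diff_add:
  assumes "\<And>I. c I \<in> V" "\<And>I. c' I \<in> V"
  shows "kd (c + c') = kd c + kd c'"
proof
  fix J
  show "kd (c + c') J = (kd c + kd c') J"
    using assms by (cases "J \<subseteq> {..<n}")
      (simp_all add: kos_diff_apply kos_diff_outside y_add scale_right_distrib sum.distrib)
qed

lemma kos_diff_zero: "kd 0 = 0"
  by (auto simp: kos_diff_def fun_eq_iff y_zero intro!: sum.neutral)

lemma kos_diff_kos_diff_apply:
  assumes c: "\<And>I. c I \<in> V" and K: "K \<subseteq> {..<n}"
  shows "kd (kd c) K = (\<Sum>k\<in>{..<n} - K. \<Sum>l\<in>{..<n} - K - {k}.
      s (koszul_sign K k * koszul_sign (insert k K) l) (y k (y l (c (insert l (insert k K))))))"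
  unfolding kos_diff_apply[OF K]
proof (rule sum.cong[OF refl])
  fix k assume k: "k \<in> {..<n} - K"
  let ?R = "{..<n} - K - {k}"
  have "insert k K \<subseteq> {..<n}" "{..<n} - insert k K = ?R" and kn: "k < n"
    using k K by auto
  then have "kd c (insert k K) = (\<Sum>l\<in>?R. s (koszul_sign (insert k K) l) (y l (c (insert l (insert k K)))))"
    by (simp add: kos_diff_apply)
  then have "y k (kd c (insert k K))
      = (\<Sum>l\<in>?R. y k (s (koszul_sign (insert k K) l) (y l (c (insert l (insert k K))))))"
    by (simp only:) (rule polyop_sum_distrib[OF polyop_y[OF kn]], simp add: c scale_in_V y_in_V)
  then have "s (koszul_sign K k) (y k (kd c (insert k K))) = (\<Sum>l\<in>?R.
      s (koszul_sign K k) (y k (s (koszul_sign (insert k K) l) (y l (c (insert l (insert k K)))))))"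
    by (simp add: scale_sum_right)
  also have "\<dots> = (\<Sum>l\<in>?R. s (koszul_sign K k * koszul_sign (insert k K) l)
      (y k (y l (c (insert l (insert k K))))))"
    by (rule sum.cong) (simp_all add: c y_scale y_in_V mult.commute kn)
  finally show "s (koszul_sign K k) (y k (kd c (insert k K))) = (\<Sum>l\<in>?R.
      s (koszul_sign K k * koszul_sign (insert k K) l) (y k (y l (c (insert l (insert k K))))))" .
qed

text \<open>The two ways of removing \<open>k\<close> and \<open>l\<close> from \<open>insert l (insert k K)\<close> carry opposite
  signs, while \<open>y k\<close> and \<open>y l\<close> commute.\<close>

lemma kos_diff_kos_diff:
  assumes c: "\<And>I. c I \<in> V"
  shows "kd (kd c) = 0"
proof
  fix K
  show "kd (kd c) K = 0 K"
  proof (cases "K \<subseteq> {..<n}")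
    case False then show ?thesis by (simp add: kos_diff_outside)
  next
    case True
    have fK: "finite K" using True finite_subset by blast
    have "kd (kd c) K = 0"
      unfolding kos_diff_kos_diff_apply[OF c True]
    proof (rule sum_offdiag_antisym)
      fix k l assume kl: "k \<in> {..<n} - K" "l \<in> {..<n} - K" "k \<noteq> l"
      have "koszul_sign K l * koszul_sign (insert l K) k = - (koszul_sign K k * koszul_sign (insert k K) l :: 'k)"
        using koszul_sign_swap[OF fK, of l k] kl by auto
      moreover have "y l (y k (c (insert k (insert l K)))) = y k (y l (c (insert l (insert k K))))"
        using kl c by (simp add: y_commute insert_commute)
      ultimately show "s (koszul_sign K l * koszul_sign (insert l K) k) (y l (y k (c (insert k (insert l K)))))
          = - s (koszul_sign K k * koszul_sign (insert k K) l) (y k (y l (c (insert l (insert k K)))))"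
        by simp
    qed simp
    then show ?thesis by simp
  qed
qed

definition wedge :: "nat \<Rightarrow> (nat set \<Rightarrow> 'm) \<Rightarrow> (nat set \<Rightarrow> 'm)" where
  "wedge i z = (\<lambda>J. if i \<in> J then s (koszul_sign (J - {i}) i) (z (J - {i})) else 0)"

lemma wedge_kos_chains:
  assumes i: "i < n" and z: "z \<in> kos_chains V n p"
  shows "wedge i z \<in> kos_chains V n (Suc p)"
  unfolding kos_chains_def mem_Collect_eq
proof (rule conjI; intro allI impI)
  show "wedge i z J \<in> V" for J using z unfolding wedge_def kos_chains_def by (auto intro: scale_in_V zero_in_V)
next
  fix J assume "wedge i z J \<noteq> 0"
  then have iJ: "i \<in> J" and nz: "z (J - {i}) \<noteq> 0" unfolding wedge_def by (auto split: if_splits)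
  then have J: "J - {i} \<subseteq> {..<n}" "card (J - {i}) = p" using z unfolding kos_chains_def by auto
  then have "finite J" using finite_subset[OF J(1)] by simp
  then have "card J = Suc p" using card_Suc_Diff1[OF _ iJ] J(2) by simp
  then show "J \<subseteq> {..<n} \<and> card J = Suc p" using J(1) iJ i by auto
qed

lemma kos_diff_wedge_not_mem:
  assumes i: "i < n" and J: "J \<subseteq> {..<n}" "i \<notin> J" and z: "\<And>I. z I \<in> V"
  shows "kd (wedge i z) J = y i (z J)"
proof -
  have "kd (wedge i z) J = s (koszul_sign J i) (y i (wedge i z (insert i J)))
      + (\<Sum>k\<in>{..<n} - J - {i}. s (koszul_sign J k) (y k (wedge i z (insert k J))))"
    unfolding kos_diff_apply[OF J(1)] using J(2) i by (subst sum.remove[of _ i]) auto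
  also have "(\<Sum>k\<in>{..<n} - J - {i}. s (koszul_sign J k) (y k (wedge i z (insert k J)))) = 0"
    by (rule sum.neutral) (auto simp: wedge_def y_zero J(2))
  also have "wedge i z (insert i J) = s (koszul_sign J i) (z J)"
    using J(2) by (simp add: wedge_def)
  finally show ?thesis using i z by (simp add: y_scale koszul_sign_square)
qed

text \<open>For \<open>i \<in> J\<close> the cycle condition at \<open>J - {i}\<close> rewrites the sum over \<open>k \<notin> J\<close>
  as the single term with \<open>k = i\<close>.\<close>

lemma kos_diff_wedge_mem:
  assumes i: "i < n" and J: "J \<subseteq> {..<n}" "i \<in> J" and z: "z \<in> kos_cycles s V n y p"
  shows "kd (wedge i z) J = y i (z J)"
proof -
  have zV: "z I \<in> V" for I using z unfolding kos_cycles_def kos_chains_def by auto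
  define J' where "J' = J - {i}"
  have JJ: "J = insert i J'" "i \<notin> J'" "finite J'" "J' \<subseteq> {..<n}"
    unfolding J'_def using J finite_subset by auto
  have D: "{..<n} - J' = insert i ({..<n} - J)" using J i unfolding J'_def by auto
  have "0 = kd z J'" using z unfolding kos_cycles_def by simp
  also have "\<dots> = s (koszul_sign J' i) (y i (z J)) + (\<Sum>k\<in>{..<n} - J. s (koszul_sign J' k) (y k (z (insert k J'))))"
    unfolding kos_diff_apply[OF JJ(4)] D using JJ(1) by simp
  finally have cyc: "(\<Sum>k\<in>{..<n} - J. s (koszul_sign J' k) (y k (z (insert k J')))) = - s (koszul_sign J' i) (y i (z J))"
    by (simp add: eq_neg_iff_add_eq_0 add.commute)
  have "kd (wedge i z) J = (\<Sum>k\<in>{..<n} - J. s (- koszul_sign J' i) (s (koszul_sign J' k) (y k (z (insert k J')))))"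
    unfolding kos_diff_apply[OF J(1)]
  proof (rule sum.cong[OF refl])
    fix k assume k: "k \<in> {..<n} - J"
    then have kJ': "k \<notin> J'" "k \<noteq> i" using JJ by auto
    have "wedge i z (insert k J) = s (koszul_sign (insert k J') i) (z (insert k J'))"
      using J(2) kJ' unfolding wedge_def J'_def by (simp add: insert_Diff_if)
    moreover have "koszul_sign J k * koszul_sign (insert k J') i = - koszul_sign J' i * (koszul_sign J' k :: 'k)"
      using koszul_sign_insert_swap[OF JJ(3) kJ'(1) JJ(2) kJ'(2)] JJ(1) by simp
    ultimately show "s (koszul_sign J k) (y k (wedge i z (insert k J)))
        = s (- koszul_sign J' i) (s (koszul_sign J' k) (y k (z (insert k J'))))"
      using k zV by (simp add: y_scale)
  qed
  also have "\<dots> = s (koszul_sign J' i * koszul_sign J' i) (y i (z J))"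
    unfolding scale_sum_right[symmetric] cyc by simp
  finally show ?thesis by (simp add: koszul_sign_square)
qed

lemma kos_diff_wedge:
  assumes i: "i < n" and z: "z \<in> kos_cycles s V n y p"
  shows "kd (wedge i z) = pointwise (y i) z"
proof
  have zc: "z \<in> kos_chains V n p" using z unfolding kos_cycles_def by auto
  then have zV: "z I \<in> V" for I unfolding kos_chains_def by auto
  fix J
  show "kd (wedge i z) J = pointwise (y i) z J"
  proof (cases "J \<subseteq> {..<n}")
    case False
    then have "z J = 0" using zc unfolding kos_chains_def by auto
    then show ?thesis using False i by (simp add: kos_diff_outside pointwise_def y_zero)
  next
    case True
    then show ?thesis
      using kos_diff_wedge_not_mem[OF i True _ zV] kos_diff_wedge_mem[OF i True _ z]
      by (cases "i \<in> J") (simp_all add: pointwise_def)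
  qed
qed

lemma kos_cycles_pointwise:
  assumes h: "h \<in> polyop" and z: "z \<in> kos_cycles s V n y p"
  shows "pointwise h z \<in> kos_cycles s V n y p"
proof -
  have zc: "z \<in> kos_chains V n p" and dz: "kd z = 0" using z unfolding kos_cycles_def by auto
  then have zV: "z I \<in> V" for I unfolding kos_chains_def by auto
  have "pointwise h z \<in> kos_chains V n p"
    unfolding kos_chains_def mem_Collect_eq pointwise_def
  proof (rule conjI; intro allI impI)
    show "h (z I) \<in> V" for I using polyop_in_V[OF h zV] .
    fix I assume "h (z I) \<noteq> 0"
    then have "z I \<noteq> 0" using polyop_zero[OF h] by auto
    then show "I \<subseteq> {..<n} \<and> card I = p" using zc unfolding kos_chains_def by blast
  qed
  moreover have "kd (pointwise h z) = 0"
    unfolding kos_diff_pointwise[OF h zV] dz by (simp add: pointwise_def polyop_zero[OF h] fun_eq_iff)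
  ultimately show ?thesis unfolding kos_cycles_def by simp
qed

lemma psubmodule_kos_cycles:
  "psubmodule (fscale s) (kos_chains V n p) n (\<lambda>i. pointwise (y i)) (kos_cycles s V n y p)"
proof -
  interpret ch: pmod "fscale s" "kos_chains V n p" n "\<lambda>i. pointwise (y i)" by (rule pmod_kos_chains)
  have "u + v \<in> kos_cycles s V n y p"
    if "u \<in> kos_cycles s V n y p" "v \<in> kos_cycles s V n y p" for u v
  proof -
    have uv: "u \<in> kos_chains V n p" "v \<in> kos_chains V n p" "kd u = 0" "kd v = 0"
      using that unfolding kos_cycles_def by auto
    have "kd (u + v) = kd u + kd v"
      by (rule kos_diff_add) (use uv(1,2) in \<open>auto simp: kos_chains_def\<close>)
    then show ?thesis using ch.add_in_V[OF uv(1,2)] uv(3,4) unfolding kos_cycles_def by simp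
  qed
  moreover have "0 \<in> kos_cycles s V n y p"
    unfolding kos_cycles_def using ch.zero_in_V kos_diff_zero by simp
  moreover have "fscale s c u \<in> kos_cycles s V n y p" if "u \<in> kos_cycles s V n y p" for c u
    unfolding fscale_eq_pointwise using polyop_scale that by (rule kos_cycles_pointwise)
  moreover have "pointwise (y i) u \<in> kos_cycles s V n y p" if "i < n" "u \<in> kos_cycles s V n y p" for i u
    using polyop_y[OF that(1)] that(2) by (rule kos_cycles_pointwise)
  ultimately show ?thesis unfolding psubmodule_def kos_cycles_def[of s V n y p] by blast
qed

lemma kos_boundaries_zero: "0 \<in> kos_boundaries s V n y p"
proof -
  have "(0 :: nat set \<Rightarrow> 'm) \<in> kos_chains V n (Suc p)" unfolding kos_chains_def using zero_in_V by auto
  then show ?thesis unfolding kos_boundaries_def using kos_diff_zero by (metis image_eqI)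
qed

lemma kos_boundaries_add:
  assumes "u \<in> kos_boundaries s V n y p" "v \<in> kos_boundaries s V n y p"
  shows "u + v \<in> kos_boundaries s V n y p"
proof -
  interpret ch: pmod "fscale s" "kos_chains V n (Suc p)" n "\<lambda>i. pointwise (y i)" by (rule pmod_kos_chains)
  obtain a b where ab: "a \<in> kos_chains V n (Suc p)" "b \<in> kos_chains V n (Suc p)" "u = kd a" "v = kd b"
    using assms unfolding kos_boundaries_def by blast
  have "kd (a + b) = u + v" using kos_diff_add ab unfolding kos_chains_def by auto
  moreover have "a + b \<in> kos_chains V n (Suc p)" using ch.add_in_V ab by blast
  ultimately show ?thesis unfolding kos_boundaries_def by (metis image_eqI)
qed

lemma kos_boundaries_sum:
  "(\<And>a. a \<in> A \<Longrightarrow> f a \<in> kos_boundaries s V n y p) \<Longrightarrow> sum f A \<in> kos_boundaries s V n y p"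
  by (induct A rule: infinite_finite_induct) (auto intro: kos_boundaries_zero kos_boundaries_add)

lemma kos_boundaries_subset_cycles: "kos_boundaries s V n y p \<subseteq> kos_cycles s V n y p"
proof
  fix b assume "b \<in> kos_boundaries s V n y p"
  then obtain c where c: "c \<in> kos_chains V n (Suc p)" "b = kd c" unfolding kos_boundaries_def by blast
  have "c I \<in> V" for I using c unfolding kos_chains_def by auto
  then show "b \<in> kos_cycles s V n y p"
    using c kos_diff_kos_chains[OF c(1)] kos_diff_kos_diff unfolding kos_cycles_def by auto
qed

lemma pointwise_y_cycle_boundary:
  assumes i: "i < n" and z: "z \<in> kos_cycles s V n y p"
  shows "pointwise (y i) z \<in> kos_boundaries s V n y p"
proof -
  have "wedge i z \<in> kos_chains V n (Suc p)"
    using wedge_kos_chains[OF i] z unfolding kos_cycles_def by auto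
  then show ?thesis unfolding kos_boundaries_def kos_diff_wedge[OF i z, symmetric] by (rule imageI)
qed

lemma ideal_op_cycle_boundary:
  assumes g: "g \<in> ideal_ops" and z: "z \<in> kos_cycles s V n y p"
  shows "pointwise g z \<in> kos_boundaries s V n y p"
proof -
  obtain h where h: "\<And>i. i < n \<Longrightarrow> h i \<in> polyop" "\<And>u. u \<in> V \<Longrightarrow> g u = (\<Sum>i<n. y i (h i u))"
    using g unfolding ideal_ops_def by blast
  have "z I \<in> V" for I using z unfolding kos_cycles_def kos_chains_def by auto
  then have "pointwise g z = (\<Sum>i<n. pointwise (y i) (pointwise (h i) z))"
    by (simp add: fun_eq_iff sum_fun_apply pointwise_def h(2))
  also have "\<dots> \<in> kos_boundaries s V n y p"
    using h(1) z by (intro kos_boundaries_sum pointwise_y_cycle_boundary kos_cycles_pointwise) auto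
  finally show ?thesis .
qed

lemma chain_ideal_op_cycle_boundary:
  assumes g: "g \<in> pmod.ideal_ops (fscale s) (kos_chains V n p) n (\<lambda>i. pointwise (y i))"
    and z: "z \<in> kos_cycles s V n y p"
  shows "g z \<in> kos_boundaries s V n y p"
proof -
  interpret ch: pmod "fscale s" "kos_chains V n p" n "\<lambda>i. pointwise (y i)" by (rule pmod_kos_chains)
  obtain h where h: "\<And>i. i < n \<Longrightarrow> h i \<in> ch.polyop"
    "\<And>u. u \<in> kos_chains V n p \<Longrightarrow> g u = (\<Sum>i<n. pointwise (y i) (h i u))"
    using g unfolding ch.ideal_ops_def by blast
  have "z \<in> kos_chains V n p" using z unfolding kos_cycles_def by auto
  then have "g z = (\<Sum>i<n. pointwise (y i) (h i z))" by (rule h(2))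
  also have "\<dots> \<in> kos_boundaries s V n y p"
    using h(1) z ch.psubmodule_polyop_closed[OF _ psubmodule_kos_cycles]
    by (intro kos_boundaries_sum pointwise_y_cycle_boundary) auto
  finally show ?thesis .
qed

lemma kos_exact_if_tM_eq_M:
  assumes N: "noetherian_pmodule s V n y" and t: "tM_eq_M V n y"
  shows "kos_exact s V n y"
  unfolding kos_exact_def
proof
  fix p
  obtain g where g: "g \<in> ideal_ops" "\<forall>v\<in>V. g v = v" using nakayama[OF N t] by blast
  have "z \<in> kos_boundaries s V n y p" if z: "z \<in> kos_cycles s V n y p" for z
  proof -
    have "pointwise g z = z"
      using z g(2) unfolding kos_cycles_def kos_chains_def pointwise_def by (auto simp: fun_eq_iff)
    then show ?thesis using ideal_op_cycle_boundary[OF g(1) z] by simp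
  qed
  then show "kos_cycles s V n y p = kos_boundaries s V n y p"
    using kos_boundaries_subset_cycles by blast
qed

lemma tM_eq_M_if_kos_exact:
  assumes ex: "kos_exact s V n y"
  shows "tM_eq_M V n y"
  unfolding tM_eq_M_def
proof
  fix v assume v: "v \<in> V"
  define c :: "nat set \<Rightarrow> 'm" where "c = (\<lambda>I. if I = {} then v else 0)"
  have "c \<in> kos_chains V n 0" unfolding kos_chains_def c_def using v zero_in_V by auto
  moreover have "kd c = 0" by (simp add: kos_diff_def c_def fun_eq_iff y_zero)
  ultimately have "c \<in> kos_boundaries s V n y 0"
    using ex unfolding kos_exact_def kos_cycles_def by blast
  then obtain b where b: "b \<in> kos_chains V n 1" "c = kd b" unfolding kos_boundaries_def by auto
  have "v = c {}" unfolding c_def by simp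
  also have "\<dots> = (\<Sum>i<n. y i (b {i}))" unfolding b(2) kos_diff_def by simp
  finally show "\<exists>w. (\<forall>i<n. w i \<in> V) \<and> v = (\<Sum>i<n. y i (w i))"
    using b(1) unfolding kos_chains_def by (intro exI[of _ "\<lambda>i. b {i}"]) auto
qed

lemma kos_exact_iff_tM_eq_M:
  "noetherian_pmodule s V n y \<Longrightarrow> kos_exact s V n y \<longleftrightarrow> tM_eq_M V n y"
  using kos_exact_if_tM_eq_M tM_eq_M_if_kos_exact by blast

text \<open>The cycles form a finitely generated submodule on which every polynomial operator acts as a
  scalar modulo boundaries, so finitely many cycles span them modulo boundaries.\<close>

lemma kos_homology_findim_if_noetherian:
  assumes N: "noetherian_pmodule s V n y"
  shows "kos_homology_findim s V n y p"
proof -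
  let ?C = "kos_chains V n p" and ?Z = "kos_cycles s V n y p" and ?B = "kos_boundaries s V n y p"
  interpret ch: pmod "fscale s" ?C n "\<lambda>i. pointwise (y i)" by (rule pmod_kos_chains)
  have "noetherian_pmodule (fscale s) ?C n (\<lambda>i. pointwise (y i))"
    unfolding kos_chains_supported_in by (rule noetherian_supported_in[OF N]) simp
  then obtain G where G: "set G \<subseteq> ?Z" "?Z \<subseteq> ch.generated {0} G"
    using ch.noetherian_finitely_generated psubmodule_kos_cycles by blast
  define X where "X = set G \<union> ?B"
  have ZC: "?Z \<subseteq> ?C" unfolding kos_cycles_def by auto
  have extend: "ch.extend_by U m \<subseteq> ch.span X" if U: "U \<subseteq> ch.span X" and m: "m \<in> set G" for U m
  proof
    fix v assume "v \<in> ch.extend_by U m"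
    then obtain u h where uh: "v = u + h m" "u \<in> U" "h \<in> ch.polyop" by (rule ch.extend_byE)
    obtain c g where cg: "g \<in> ch.ideal_ops" "\<forall>u\<in>?C. h u = fscale s c u + g u"
      using ch.polyop_scalar_plus_ideal_op[OF uh(3)] by blast
    have mZ: "m \<in> ?Z" using m G(1) by blast
    have "g m \<in> ch.span X"
      using chain_ideal_op_cycle_boundary[OF cg(1) mZ] unfolding X_def by (intro ch.span_base) simp
    moreover have "fscale s c m \<in> ch.span X" unfolding X_def using m by (intro ch.span_scale ch.span_base) simp
    moreover have "h m = fscale s c m + g m" using cg(2) mZ ZC by blast
    ultimately have "h m \<in> ch.span X" using ch.span_add by metis
    then show "v \<in> ch.span X" using uh U ch.span_add by blast
  qed
  have generated: "ch.generated U G' \<subseteq> ch.span X" if "U \<subseteq> ch.span X" "set G' \<subseteq> set G" for U G'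
    using that
  proof (induct G' arbitrary: U)
    case (Cons m G') then show ?case using extend by simp
  qed simp
  have "?Z \<subseteq> ch.span X" using G(2) generated[of "{0}" G] ch.span_zero by auto
  then show ?thesis unfolding kos_homology_findim_def X_def using G(1) by blast
qed

end

section \<open>The modules M^(r)\<close>

lemma trunc_idx_mono: "r \<le> r' \<Longrightarrow> trunc_idx n r \<subseteq> trunc_idx n r'"
  unfolding trunc_idx_def by auto

lemma trunc_idx_0: "trunc_idx n 0 = {}"
  unfolding trunc_idx_def by simp

lemma zero_in_trunc_idx: "1 \<le> r \<Longrightarrow> (\<lambda>_. 0) \<in> trunc_idx n r"
  unfolding trunc_idx_def by auto

lemma finite_trunc_idx: "finite (trunc_idx n r)"
proof (rule finite_subset)
  show "trunc_idx n r \<subseteq> {f. \<forall>x. (x \<in> {..<n} \<longrightarrow> f x \<in> {..<r}) \<and> (x \<notin> {..<n} \<longrightarrow> f x = 0)}"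
  proof
    fix \<alpha> assume a: "\<alpha> \<in> trunc_idx n r"
    have "\<alpha> x < r" if "x < n" for x
      using member_le_sum[of x "{..<n}" \<alpha>] a that unfolding trunc_idx_def by simp
    then show "\<alpha> \<in> {f. \<forall>x. (x \<in> {..<n} \<longrightarrow> f x \<in> {..<r}) \<and> (x \<notin> {..<n} \<longrightarrow> f x = 0)}"
      using a unfolding trunc_idx_def by auto
  qed
  show "finite {f. \<forall>x. (x \<in> {..<n} \<longrightarrow> f x \<in> {..<r}) \<and> (x \<notin> {..<n} \<longrightarrow> f x = (0::nat))}"
    by (rule finite_set_of_finite_funs) auto
qed

definition dec_idx :: "nat \<Rightarrow> (nat \<Rightarrow> nat) \<Rightarrow> (nat \<Rightarrow> nat)" where
  "dec_idx i \<alpha> = \<alpha>(i := \<alpha> i - 1)"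

lemma dec_idx_trunc_idx:
  assumes \<alpha>: "\<alpha> \<in> trunc_idx n (Suc r)" and i: "i < n" "1 \<le> \<alpha> i"
  shows "dec_idx i \<alpha> \<in> trunc_idx n r"
proof -
  have "sum \<alpha> {..<n} = \<alpha> i + sum \<alpha> ({..<n} - {i})" using i by (subst sum.remove[of _ i]) auto
  moreover have "sum (dec_idx i \<alpha>) {..<n} = (\<alpha> i - 1) + sum \<alpha> ({..<n} - {i})"
    using i by (subst sum.remove[of _ i]) (auto simp: dec_idx_def intro!: sum.cong)
  ultimately show ?thesis using \<alpha> i unfolding trunc_idx_def by (auto simp: dec_idx_def)
qed

definition top_idx :: "nat \<Rightarrow> nat \<Rightarrow> (nat \<Rightarrow> nat) set" where
  "top_idx n r = trunc_idx n (Suc r) - trunc_idx n r"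

lemma finite_top_idx: "finite (top_idx n r)"
  unfolding top_idx_def by (simp add: finite_trunc_idx)

lemma Mr_supported_in: "Mr V n r = supported_in V (trunc_idx n r)"
  unfolding Mr_def supported_in_def by auto

lemma Mr_0: "0 \<in> V \<Longrightarrow> Mr V n 0 = {0}"
  unfolding Mr_def trunc_idx_0 by (auto simp: fun_eq_iff)

lemma xr_apply: "xr y n r i f \<alpha> = (if \<alpha> \<in> trunc_idx n r
    then y i (f \<alpha>) - (if 1 \<le> \<alpha> i then f (dec_idx i \<alpha>) else 0) else 0)"
  unfolding xr_def dec_idx_def by simp

definition trunc_proj :: "nat \<Rightarrow> nat \<Rightarrow> ((nat \<Rightarrow> nat) \<Rightarrow> 'm::zero) \<Rightarrow> ((nat \<Rightarrow> nat) \<Rightarrow> 'm)" where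
  "trunc_proj n r f = (\<lambda>\<alpha>. if \<alpha> \<in> trunc_idx n r then f \<alpha> else 0)"

context pmod
begin

lemma xr_commute:
  assumes i: "i < n" and j: "j < n" and f: "f \<in> Mr V n r"
  shows "xr y n r i (xr y n r j f) = xr y n r j (xr y n r i f)"
proof
  fix \<alpha>
  have fV: "f \<beta> \<in> V" for \<beta> using f unfolding Mr_def by auto
  show "xr y n r i (xr y n r j f) \<alpha> = xr y n r j (xr y n r i f) \<alpha>"
  proof (cases "\<alpha> \<in> trunc_idx n r")
    case False then show ?thesis by (simp add: xr_apply)
  next
    case T: True
    have T': "\<alpha> \<in> trunc_idx n (Suc r)" using T trunc_idx_mono[of r "Suc r" n] by auto
    have dec: "dec_idx k \<alpha> \<in> trunc_idx n r" if "k < n" "1 \<le> \<alpha> k" for k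
      using dec_idx_trunc_idx[OF T' that] .
    define ci where "ci = (1 \<le> \<alpha> i)"
    define cj where "cj = (1 \<le> \<alpha> j)"
    have e1: "xr y n r i (xr y n r j f) \<alpha> = y i (y j (f \<alpha>)) - (if cj then y i (f (dec_idx j \<alpha>)) else 0)
        - (if ci then y j (f (dec_idx i \<alpha>)) - (if 1 \<le> dec_idx i \<alpha> j then f (dec_idx j (dec_idx i \<alpha>)) else 0) else 0)"
      using T i j fV dec[OF i] unfolding ci_def cj_def
      by (auto simp: xr_apply polyop_diff_distrib[OF polyop_y] y_in_V y_zero)
    have e2: "xr y n r j (xr y n r i f) \<alpha> = y j (y i (f \<alpha>)) - (if ci then y j (f (dec_idx i \<alpha>)) else 0)
        - (if cj then y i (f (dec_idx j \<alpha>)) - (if 1 \<le> dec_idx j \<alpha> i then f (dec_idx i (dec_idx j \<alpha>)) else 0) else 0)"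
      using T i j fV dec[OF j] unfolding ci_def cj_def
      by (auto simp: xr_apply polyop_diff_distrib[OF polyop_y] y_in_V y_zero)
    show ?thesis
    proof (cases "i = j")
      case True then show ?thesis using e1 e2 by simp
    next
      case False
      have d: "dec_idx i \<alpha> j = \<alpha> j" "dec_idx j \<alpha> i = \<alpha> i" "dec_idx j (dec_idx i \<alpha>) = dec_idx i (dec_idx j \<alpha>)"
        using False by (auto simp: dec_idx_def fun_eq_iff)
      show ?thesis unfolding e1 e2 d ci_def[symmetric] cj_def[symmetric] y_commute[OF i j fV]
        by (cases ci; cases cj) (simp_all add: algebra_simps)
    qed
  qed
qed

lemma pmod_Mr: "pmod (fscale s) (Mr V n r) n (xr y n r)"
  unfolding pmod_def
proof (rule conjI[OF module_fscale[OF mod]])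
  have fV: "f \<alpha> \<in> V" if "f \<in> Mr V n r" for f \<alpha> using that unfolding Mr_def by auto
  show "pmodule (fscale s) (Mr V n r) n (xr y n r)"
    unfolding pmodule_def
  proof (intro conjI ballI allI impI)
    show "0 \<in> Mr V n r" unfolding Mr_def using zero_in_V by simp
  next
    fix f g assume "f \<in> Mr V n r" "g \<in> Mr V n r"
    then show "f + g \<in> Mr V n r" unfolding Mr_def by simp (metis add_in_V add.right_neutral)
  next
    fix c f assume "f \<in> Mr V n r"
    then show "fscale s c f \<in> Mr V n r" unfolding Mr_def fscale_def by simp (metis scale_in_V scale_zero_right)
  next
    fix i f assume i: "i < n" and f: "f \<in> Mr V n r"
    show "xr y n r i f \<in> Mr V n r" unfolding Mr_def mem_Collect_eq
    proof (intro conjI allI impI)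
      show "xr y n r i f \<alpha> \<in> V" for \<alpha>
        unfolding xr_apply using fV[OF f] i by (auto intro!: diff_in_V y_in_V zero_in_V)
      show "\<alpha> \<in> trunc_idx n r" if "xr y n r i f \<alpha> \<noteq> 0" for \<alpha>
        using that unfolding xr_apply by (auto split: if_splits)
    qed
  next
    fix i f g assume i: "i < n" and f: "f \<in> Mr V n r" and g: "g \<in> Mr V n r"
    show "xr y n r i (f + g) = xr y n r i f + xr y n r i g"
      unfolding fun_eq_iff xr_apply using fV[OF f] fV[OF g] i by (auto simp: y_add)
  next
    fix i c f assume i: "i < n" and f: "f \<in> Mr V n r"
    show "xr y n r i (fscale s c f) = fscale s c (xr y n r i f)"
      unfolding fun_eq_iff xr_apply fscale_def using fV[OF f] i by (auto simp: y_scale scale_right_diff_distrib)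
  next
    fix i j f assume "i < n" "j < n" "f \<in> Mr V n r"
    then show "xr y n r i (xr y n r j f) = xr y n r j (xr y n r i f)" by (rule xr_commute)
  qed
qed

lemma xr_top:
  assumes f: "f \<in> supported_in V (top_idx n r)" and i: "i < n"
  shows "xr y n (Suc r) i f = pointwise (y i) f"
proof
  fix \<alpha>
  show "xr y n (Suc r) i f \<alpha> = pointwise (y i) f \<alpha>"
  proof (cases "\<alpha> \<in> trunc_idx n (Suc r)")
    case True
    have "f (dec_idx i \<alpha>) = 0" if "1 \<le> \<alpha> i"
      using dec_idx_trunc_idx[OF True i that] f unfolding supported_in_def top_idx_def by blast
    then show ?thesis using True by (simp add: xr_apply pointwise_def)
  next
    case False
    then have "f \<alpha> = 0" using f unfolding supported_in_def top_idx_def by blast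
    then show ?thesis using False i by (simp add: xr_apply pointwise_def y_zero)
  qed
qed

lemma pmod_hom_trunc_proj:
  "pmod_hom n (fscale s) (Mr V n (Suc r)) (xr y n (Suc r)) (fscale s) (Mr V n r) (xr y n r) (trunc_proj n r)"
  unfolding pmod_hom_def
proof (intro conjI ballI allI impI)
  fix f assume f: "f \<in> Mr V n (Suc r)"
  show "trunc_proj n r f \<in> Mr V n r" using f zero_in_V unfolding Mr_def trunc_proj_def by auto
  fix i assume i: "i < n"
  show "trunc_proj n r (xr y n (Suc r) i f) = xr y n r i (trunc_proj n r f)"
  proof
    fix \<alpha>
    show "trunc_proj n r (xr y n (Suc r) i f) \<alpha> = xr y n r i (trunc_proj n r f) \<alpha>"
    proof (cases "\<alpha> \<in> trunc_idx n r")
      case True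
      then have "\<alpha> \<in> trunc_idx n (Suc r)" using trunc_idx_mono[of r "Suc r" n] by auto
      then show ?thesis using True dec_idx_trunc_idx[OF _ i] by (simp add: trunc_proj_def xr_apply)
    qed (simp add: trunc_proj_def xr_apply)
  qed
qed (simp_all add: trunc_proj_def fscale_def fun_eq_iff scale_right_distrib)

lemma trunc_proj_eq_0_iff:
  assumes "f \<in> Mr V n (Suc r)"
  shows "trunc_proj n r f = 0 \<longleftrightarrow> f \<in> supported_in V (top_idx n r)"
  using assms unfolding Mr_def supported_in_def top_idx_def trunc_proj_def
  by (auto simp: fun_eq_iff)

lemma trunc_proj_Mr:
  assumes "f \<in> Mr V n r"
  shows "f \<in> Mr V n (Suc r)" "trunc_proj n r f = f"
  using assms trunc_idx_mono[of r "Suc r" n] unfolding Mr_def trunc_proj_def by (auto simp: fun_eq_iff)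

lemma top_supported_in_Mr: "supported_in V (top_idx n r) \<subseteq> Mr V n (Suc r)"
  unfolding Mr_supported_in supported_in_def top_idx_def by auto

lemma noetherian_Mr:
  assumes N: "noetherian_pmodule s V n y"
  shows "noetherian_pmodule (fscale s) (Mr V n r) n (xr y n r)"
proof (induct r)
  case 0
  show ?case using noetherian_pmodule_zero pmod.pm[OF pmod_Mr[of 0]] Mr_0[OF zero_in_V] by metis
next
  case (Suc r)
  interpret R: pmod "fscale s" "Mr V n (Suc r)" n "xr y n (Suc r)" by (rule pmod_Mr)
  show ?case
  proof (rule R.noetherian_extension[OF top_supported_in_Mr _ Suc pmod_hom_trunc_proj trunc_proj_eq_0_iff])
    show "noetherian_pmodule (fscale s) (supported_in V (top_idx n r)) n (xr y n (Suc r))"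
      by (rule noetherian_pmodule_cong[OF noetherian_supported_in[OF N finite_top_idx]]) (simp add: xr_top)
  qed
qed

lemma tM_eq_M_Mr:
  assumes t: "tM_eq_M V n (op_shift s y a)"
  shows "tM_eq_M (Mr V n r) n (op_shift (fscale s) (xr y n r) a)"
proof (induct r)
  case 0
  interpret R: pmod "fscale s" "Mr V n 0" n "op_shift (fscale s) (xr y n 0) a"
    by (rule pmod.pmod_shift[OF pmod_Mr])
  show ?case by (rule R.tM_eq_M_zero_module[OF Mr_0[OF zero_in_V]])
next
  case (Suc r)
  interpret R: pmod "fscale s" "Mr V n (Suc r)" n "xr y n (Suc r)" by (rule pmod_Mr)
  interpret Ra: pmod "fscale s" "Mr V n (Suc r)" n "op_shift (fscale s) (xr y n (Suc r)) a"
    by (rule R.pmod_shift)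
  interpret Va: pmod s V n "op_shift s y a" by (rule pmod_shift)
  let ?K = "supported_in V (top_idx n r)"
  show ?case
  proof (rule Ra.tM_eq_M_extension[OF top_supported_in_Mr _ Suc R.pmod_hom_shift[OF pmod_hom_trunc_proj]])
    show "tM_eq_M ?K n (op_shift (fscale s) (xr y n (Suc r)) a)"
    proof (rule tM_eq_M_cong[OF Va.tM_eq_M_supported_in[OF t]])
      fix i f assume "i < n" "f \<in> ?K"
      then show "op_shift (fscale s) (xr y n (Suc r)) a i f = pointwise (op_shift s y a i) f"
        using xr_top by (simp add: op_shift_def fscale_def pointwise_def fun_eq_iff)
    qed
    show "\<exists>f\<in>Mr V n (Suc r). trunc_proj n r f = g" if "g \<in> Mr V n r" for g
      using trunc_proj_Mr[OF that] by blast
  qed (rule trunc_proj_eq_0_iff)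
qed

lemma pmod_hom_coeff_0:
  assumes r: "1 \<le> r"
  shows "pmod_hom n (fscale s) (Mr V n r) (xr y n r) s V y (\<lambda>f. f (\<lambda>_. 0))"
  unfolding pmod_hom_def using zero_in_trunc_idx[OF r] by (auto simp: Mr_def fscale_def xr_apply)

lemma tM_eq_M_if_tM_eq_M_Mr:
  assumes r: "1 \<le> r" and t: "tM_eq_M (Mr V n r) n (op_shift (fscale s) (xr y n r) a)"
  shows "tM_eq_M V n (op_shift s y a)"
proof -
  interpret R: pmod "fscale s" "Mr V n r" n "xr y n r" by (rule pmod_Mr)
  interpret Ra: pmod "fscale s" "Mr V n r" n "op_shift (fscale s) (xr y n r) a" by (rule R.pmod_shift)
  show ?thesis
  proof (rule Ra.tM_eq_M_image[OF R.pmod_hom_shift[OF pmod_hom_coeff_0[OF r]] _ t])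
    fix v assume v: "v \<in> V"
    have "(\<lambda>\<alpha>. if \<alpha> = (\<lambda>_. 0) then v else 0) \<in> Mr V n r"
      using v zero_in_V zero_in_trunc_idx[OF r] unfolding Mr_def by auto
    then show "\<exists>f\<in>Mr V n r. f (\<lambda>_. 0) = v" by (rule bexI[rotated]) simp
  qed
qed

end

theorem lemma4p1:
  fixes s :: "'k::field \<Rightarrow> 'm::ab_group_add \<Rightarrow> 'm"
    and n :: nat
    and x :: "nat \<Rightarrow> 'm \<Rightarrow> 'm"
  assumes "alg_closed TYPE('k)"
    and "vector_space s"
    and "noetherian_pmodule s UNIV n x"
  shows "\<forall>r\<ge>1.
      noetherian_pmodule (fscale s) (Mr UNIV n r) n (xr x n r) \<and>
      taylor_spectrum (fscale s) (Mr UNIV n r) n (xr x n r) = taylor_spectrum s UNIV n x \<and>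
      (\<forall>p a. (\<forall>i\<ge>n. a i = 0) \<longrightarrow>
         kos_homology_findim (fscale s) (Mr UNIV n r) n (op_shift (fscale s) (xr x n r) a) p)"
proof (intro allI impI)
  fix r :: nat assume r: "1 \<le> r"
  note N = assms(3)
  interpret M: pmod s UNIV n x
    using assms(2) N by (simp add: pmod_def module_iff_vector_space noetherian_pmodule_def)
  interpret R: pmod "fscale s" "Mr UNIV n r" n "xr x n r" by (rule M.pmod_Mr)
  have NR: "noetherian_pmodule (fscale s) (Mr UNIV n r) n (xr x n r)" by (rule M.noetherian_Mr[OF N])
  have "kos_exact (fscale s) (Mr UNIV n r) n (op_shift (fscale s) (xr x n r) a)
      \<longleftrightarrow> kos_exact s UNIV n (op_shift s x a)" for a
    using pmod.kos_exact_iff_tM_eq_M[OF R.pmod_shift R.noetherian_shift[OF NR]]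
      pmod.kos_exact_iff_tM_eq_M[OF M.pmod_shift M.noetherian_shift[OF N]]
      M.tM_eq_M_Mr M.tM_eq_M_if_tM_eq_M_Mr[OF r] by blast
  then have "taylor_spectrum (fscale s) (Mr UNIV n r) n (xr x n r) = taylor_spectrum s UNIV n x"
    unfolding taylor_spectrum_def by simp
  moreover have "kos_homology_findim (fscale s) (Mr UNIV n r) n (op_shift (fscale s) (xr x n r) a) p" for p a
    by (rule pmod.kos_homology_findim_if_noetherian[OF R.pmod_shift R.noetherian_shift[OF NR]])
  ultimately show "noetherian_pmodule (fscale s) (Mr UNIV n r) n (xr x n r) \<and>
      taylor_spectrum (fscale s) (Mr UNIV n r) n (xr x n r) = taylor_spectrum s UNIV n x \<and>
      (\<forall>p a. (\<forall>i\<ge>n. a i = 0) \<longrightarrow>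
         kos_homology_findim (fscale s) (Mr UNIV n r) n (op_shift (fscale s) (xr x n r) a) p)"
    using NR by blast
qed

end
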